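(* Let $p,q\in[1,\infty]$, let $\varphi_0,\varphi_1,\varphi$ be positive non-degenerate quasi-concave functions on $(0,\infty)$, let $\{\widetilde t_k\}$ be a discretizing sequence for $\varphi(\varphi_0,\varphi_1)$, and let $\overline l_q=\big(l_q,\,l_q(1/\widetilde t_k)\big)$. Then $$\left((\overline l_q)_{\varphi_0,p},(\overline l_q)_{\varphi_1,p}\right)_{\varphi,p}=l_p\Big(\frac1{\varphi(\varphi_0,\varphi_1)(\widetilde t_i)}\Big).$$
   Context: A function $\psi:(0,\infty)\to(0,\infty)$ is non-degenerate quasi-concave if it is non-decreasing, $\psi(t)/t$ is non-increasing, and $\lim_{t\to0+}\psi(t)=\lim_{t\to\infty}\psi(t)/t=\lim_{t\to0+}t/\psi(t)=\lim_{t\to\infty}1/\psi(t)=0$. $\varphi(\varphi_0,\varphi_1)(t)=\varphi_0(t)\varphi(\varphi_1(t)/\varphi_0(t))$. A positive sequence is strongly increasing if $\inf_k a_{k+1}/a_k\ge2$, strongly decreasing if $\sup_k a_{k+1}/a_k\le1/2$. A strongly increasing $\{s_k\}_{k\in\mathbb Z}$ is a discretizing sequence for $\psi$ if $\{\psi(s_k)\}$ is strongly increasing, $\{\psi(s_k)/s_k\}$ is strongly decreasing, and $\mathbb Z=\mathbb Z_1\sqcup\mathbb Z_2$ with $\psi(s_{k+1})\le2\psi(s_k)$ for $k\in\mathbb Z_1$ and $\psi(s_k)/s_k\le2\psi(s_{k+1})/s_{k+1}$ for $k\in\mathbb Z_2$. For a Banach couple $\overline X$, $K(t,x;\overline X)=\inf_{x=x_0+x_1}(\|x_0\|_{X_0}+t\|x_1\|_{X_1})$,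 and $\overline X_{\psi,p}$ is the space of $x\in X_0+X_1$ with $\big(\sum_k(K(s_k,x;\overline X)/\psi(s_k))^p\big)^{1/p}<\infty$ (sup if $p=\infty$), $\{s_k\}$ a fixed discretizing sequence for $\psi$. For a positive weight $u$, $l_q(u)=\{a:\{a_iu_i\}\in l_q\}$ with norm $\|\{a_iu_i\}\|_{l_q}$. Sequences are indexed by $\mathbb Z$; equality means equal sets with equivalent norms. *)

theory Defs
  imports "HOL-Analysis.Analysis"
begin

definition qconcave :: "(real \<Rightarrow> real) \<Rightarrow> bool" where
  "qconcave \<psi> \<longleftrightarrow>
     (\<forall>t>0. \<psi> t > 0) \<and>
     mono_on {0<..} \<psi> \<and>
     antimono_on {0<..} (\<lambda>t. \<psi> t / t) \<and>
     (\<psi> \<longlongrightarrow> 0) (at_right 0) \<and>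
     ((\<lambda>t. \<psi> t / t) \<longlongrightarrow> 0) at_top \<and>
     ((\<lambda>t. t / \<psi> t) \<longlongrightarrow> 0) (at_right 0) \<and>
     ((\<lambda>t. 1 / \<psi> t) \<longlongrightarrow> 0) at_top"

text \<open>phi(phi0,phi1)(t) = phi0(t) * phi(phi1(t)/phi0(t)).\<close>
definition fcomp :: "(real \<Rightarrow> real) \<Rightarrow> (real \<Rightarrow> real) \<Rightarrow> (real \<Rightarrow> real) \<Rightarrow> real \<Rightarrow> real" where
  "fcomp \<phi> \<phi>0 \<phi>1 t = \<phi>0 t * \<phi> (\<phi>1 t / \<phi>0 t)"

definition strongly_inc :: "(int \<Rightarrow> real) \<Rightarrow> bool" where
  "strongly_inc a \<longleftrightarrow> (\<forall>k. a k > 0) \<and> (\<forall>k. a (k+1) \<ge> 2 * a k)"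

definition strongly_dec :: "(int \<Rightarrow> real) \<Rightarrow> bool" where
  "strongly_dec a \<longleftrightarrow> (\<forall>k. a k > 0) \<and> (\<forall>k. a (k+1) \<le> a k / 2)"

definition discretizing :: "(int \<Rightarrow> real) \<Rightarrow> (real \<Rightarrow> real) \<Rightarrow> bool" where
  "discretizing s \<psi> \<longleftrightarrow>
     strongly_inc s \<and>
     strongly_inc (\<lambda>k. \<psi> (s k)) \<and>
     strongly_dec (\<lambda>k. \<psi> (s k) / s k) \<and>
     (\<exists>Z1 Z2. Z1 \<union> Z2 = UNIV \<and> Z1 \<inter> Z2 = {} \<and>
        (\<forall>k\<in>Z1. \<psi> (s (k+1)) \<le> 2 * \<psi> (s k)) \<and>
        (\<forall>k\<in>Z2. \<psi> (s k) / s k \<le> 2 * (\<psi> (s (k+1)) / s (k+1))))"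

text \<open>Sequence spaces over Z are modelled by extended norms
  N :: (int => real) => ennreal; the space is {x. N x < top}.\<close>

definition enn_pow :: "real \<Rightarrow> ennreal \<Rightarrow> ennreal" where
  "enn_pow r b = (if b = top then top else ennreal (enn2real b powr r))"

definition lp_enn :: "ennreal \<Rightarrow> (int \<Rightarrow> ennreal) \<Rightarrow> ennreal" where
  "lp_enn p b = (if p = top then (SUP k. b k)
     else enn_pow (1 / enn2real p) (\<Sum>\<^sub>\<infinity>k\<in>UNIV. enn_pow (enn2real p) (b k)))"

text \<open>Norm of the weighted space l_q(u): norm of (a_i u_i) in l_q.\<close>
definition lqw :: "ennreal \<Rightarrow> (int \<Rightarrow> real) \<Rightarrow> (int \<Rightarrow> real) \<Rightarrow> ennreal" where
  "lqw q u a = lp_enn q (\<lambda>i. ennreal \<bar>a i * u i\<bar>)"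

definition Kfun :: "((int \<Rightarrow> real) \<Rightarrow> ennreal) \<Rightarrow> ((int \<Rightarrow> real) \<Rightarrow> ennreal)
    \<Rightarrow> real \<Rightarrow> (int \<Rightarrow> real) \<Rightarrow> ennreal" where
  "Kfun N0 N1 t x = (INF y \<in> {(x0, x1). \<forall>i. x i = x0 i + x1 i}. N0 (fst y) + ennreal t * N1 (snd y))"

text \<open>Norm of the K-space (X0,X1)_{psi,p} w.r.t. the discretizing sequence s.\<close>
definition Kspace :: "((int \<Rightarrow> real) \<Rightarrow> ennreal) \<Rightarrow> ((int \<Rightarrow> real) \<Rightarrow> ennreal)
    \<Rightarrow> (int \<Rightarrow> real) \<Rightarrow> (real \<Rightarrow> real) \<Rightarrow> ennreal \<Rightarrow> (int \<Rightarrow> real) \<Rightarrow> ennreal" where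
  "Kspace N0 N1 s \<psi> p x = lp_enn p (\<lambda>k. Kfun N0 N1 (s k) x / ennreal (\<psi> (s k)))"

text \<open>Equal sets with equivalent norms.\<close>
definition equiv_norms :: "('a \<Rightarrow> ennreal) \<Rightarrow> ('a \<Rightarrow> ennreal) \<Rightarrow> bool" where
  "equiv_norms N M \<longleftrightarrow> (\<exists>c C. 0 < c \<and> 0 < C \<and>
     (\<forall>x. ennreal c * N x \<le> M x \<and> M x \<le> ennreal C * N x))"

end

theory Submission
  imports Defs
begin

text \<open>
  Write rho k for phi(phi0,phi1)(tt k) and ratio k for phi1(tt k) / phi0(tt k), so that
  rho k = phi0(tt k) * phi(ratio k) and the right-hand side is l_p of the sequence |x k| / rho k.
  The K-functional of (l_q, l_q(1/tt)) at t is at most the l_1 norm of min(1, t / tt k) * x k and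
  at least each of its terms.

  Upper estimate: at the point s m of the outer K-functional, split x according to whether
  ratio k \<le> s m. The two parts are measured in the intermediate spaces by positive kernels
  acting on |x k| / rho k. All the functions involved grow or decay geometrically along the
  discretizing sequences, so the square roots of the kernels have bounded row and column sums,
  and a Schur-type argument gives the l_p bound.

  Lower estimate: for every k pick indices m, j0, j1 at suitable end points of the cells of
  ratio k and tt k with respect to s, s0, s1. Then |x k| / rho k is dominated by the K-functionals
  of any decomposition x = x0 + x1 at these points, with weights depending on k. Every index is
  picked by boundedly many classes of k along which these weights decay geometrically, so summing
  the p-th powers over k loses only a constant factor.
\<close>

definition zsum :: "(int \<Rightarrow> ennreal) \<Rightarrow> ennreal" where
  "zsum f = (\<integral>\<^sup>+k. f k \<partial>count_space UNIV)"

lemma infsum_eq_zsum: "infsum f UNIV = zsum f"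
proof -
  have "zsum f = (SUP F\<in>{F. finite F \<and> F \<subseteq> UNIV}. sum f F)"
  proof (rule antisym)
    have bij: "bij_betw (from_nat_into (UNIV::int set)) UNIV UNIV"
      by (rule bij_betw_from_nat_into) (auto simp: infinite_UNIV_int)
    have "zsum f = (\<integral>\<^sup>+n. f (from_nat_into UNIV n) \<partial>count_space UNIV)"
      unfolding zsum_def by (rule nn_integral_bij_count_space[OF bij, symmetric])
    also have "\<dots> = (SUP n. \<Sum>i<n. f (from_nat_into UNIV i))"
      by (simp add: nn_integral_count_space_nat suminf_eq_SUP)
    also have "\<dots> \<le> (SUP F\<in>{F. finite F \<and> F \<subseteq> UNIV}. sum f F)"
    proof (rule SUP_least)
      fix n
      have "(\<Sum>i<n. f (from_nat_into UNIV i)) = sum f (from_nat_into UNIV ` {..<n})"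
        using bij by (subst sum.reindex) (auto simp: bij_betw_def inj_on_def)
      then show "(\<Sum>i<n. f (from_nat_into UNIV i)) \<le> (SUP F\<in>{F. finite F \<and> F \<subseteq> UNIV}. sum f F)"
        by (auto intro: SUP_upper2)
    qed
    finally show "zsum f \<le> (SUP F\<in>{F. finite F \<and> F \<subseteq> UNIV}. sum f F)" .
  next
    show "(SUP F\<in>{F. finite F \<and> F \<subseteq> UNIV}. sum f F) \<le> zsum f"
    proof (rule SUP_least)
      fix F :: "int set" assume "F \<in> {F. finite F \<and> F \<subseteq> UNIV}"
      then have "sum f F = (\<integral>\<^sup>+k. f k * indicator F k \<partial>count_space UNIV)"
        by (simp add: nn_integral_count_space_finite nn_integral_count_space_indicator[symmetric])
      also have "\<dots> \<le> zsum f"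
        unfolding zsum_def by (rule nn_integral_mono) (auto simp: indicator_def)
      finally show "sum f F \<le> zsum f" .
    qed
  qed
  then show ?thesis
    by (subst nonneg_infsum_complete) auto
qed

lemma zsum_mono: "(\<And>k. f k \<le> g k) \<Longrightarrow> zsum f \<le> zsum g"
  unfolding zsum_def by (rule nn_integral_mono) auto

lemma zsum_add: "zsum (\<lambda>k. f k + g k) = zsum f + zsum g"
  unfolding zsum_def by (rule nn_integral_add) auto

lemma zsum_cmult: "zsum (\<lambda>k. c * f k) = c * zsum f"
  unfolding zsum_def by (rule nn_integral_cmult) auto

lemma zsum_cmult_right: "zsum (\<lambda>k. f k * c) = zsum f * c"
  using zsum_cmult[of c f] by (simp add: mult.commute)

lemma zsum_upper: "f k \<le> zsum f"
  unfolding zsum_def by (rule nn_integral_ge_point) auto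

lemma zsum_swap: "zsum (\<lambda>i. zsum (\<lambda>k. f i k)) = zsum (\<lambda>k. zsum (\<lambda>i. f i k))"
  unfolding zsum_def
  by (rule nn_integral_count_space_nn_integral[symmetric]) auto

lemma zsum_delta: "zsum (\<lambda>k. if k = i then c else 0) = c"
proof -
  have "zsum (\<lambda>k. if k = i then c else 0) = (\<Sum>k\<in>{i}. if k = i then c else 0)"
    unfolding zsum_def by (rule nn_integral_count_space') auto
  then show ?thesis by simp
qed

lemma zsum_split: "zsum f = zsum (\<lambda>k. if P k then f k else 0) + zsum (\<lambda>k. if P k then 0 else f k)"
  by (subst zsum_add[symmetric]) (auto intro!: arg_cong[where f=zsum])

lemma zsum_reflect: "zsum (\<lambda>k. f (- k)) = zsum f"
proof -
  have "bij_betw (\<lambda>k::int. - k) UNIV UNIV"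
    by (rule bij_betwI[where g="\<lambda>k. - k"]) auto
  then show ?thesis unfolding zsum_def by (rule nn_integral_bij_count_space)
qed

lemma zsum_shift_nat:
  fixes f :: "nat \<Rightarrow> ennreal"
  shows "zsum (\<lambda>k. if k0 \<le> k then f (nat (k - k0)) else 0) = (\<Sum>n. f n)"
proof -
  have bij: "bij_betw (\<lambda>n::nat. k0 + int n) UNIV {k0..}"
    by (rule bij_betwI[where g="\<lambda>k. nat (k - k0)"]) auto
  have "zsum (\<lambda>k. if k0 \<le> k then f (nat (k - k0)) else 0)
      = (\<integral>\<^sup>+k. (if k0 \<le> k then f (nat (k - k0)) else 0) * indicator {k0..} k \<partial>count_space UNIV)"
    unfolding zsum_def by (intro nn_integral_cong) (auto simp: indicator_def)
  also have "\<dots> = (\<integral>\<^sup>+k. (if k0 \<le> k then f (nat (k - k0)) else 0) \<partial>count_space {k0..})"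
    by (rule nn_integral_count_space_indicator[symmetric]) simp
  also have "\<dots> = (\<integral>\<^sup>+n. f n \<partial>count_space UNIV)"
    by (subst nn_integral_bij_count_space[OF bij, symmetric]) simp
  also have "\<dots> = (\<Sum>n. f n)" by (rule nn_integral_count_space_nat)
  finally show ?thesis .
qed

lemma zsum_swap3:
  "zsum (\<lambda>m. zsum (\<lambda>j. zsum (\<lambda>k. F m j k * G k))) = zsum (\<lambda>k. G k * zsum (\<lambda>m. zsum (\<lambda>j. F m j k)))"
proof -
  have inner: "zsum (\<lambda>j. zsum (\<lambda>k. F m j k * G k)) = zsum (\<lambda>k. zsum (\<lambda>j. F m j k) * G k)" for m
    by (subst zsum_swap) (simp add: zsum_cmult_right)
  have "zsum (\<lambda>m. zsum (\<lambda>j. zsum (\<lambda>k. F m j k * G k))) = zsum (\<lambda>m. zsum (\<lambda>k. zsum (\<lambda>j. F m j k) * G k))"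
    by (simp add: inner)
  also have "\<dots> = zsum (\<lambda>k. zsum (\<lambda>m. zsum (\<lambda>j. F m j k) * G k))" by (rule zsum_swap)
  also have "\<dots> = zsum (\<lambda>k. zsum (\<lambda>m. zsum (\<lambda>j. F m j k)) * G k)"
    by (simp only: zsum_cmult_right)
  finally show ?thesis
    by (simp only: mult.commute)
qed

lemma zsum_partition: "zsum F = zsum (\<lambda>m. zsum (\<lambda>k. if g k = m then F k else 0))"
proof -
  have "zsum (\<lambda>m. if g k = m then F k else 0) = F k" for k
  proof -
    have "(\<lambda>m. if g k = m then F k else 0) = (\<lambda>m. if m = g k then F k else 0)" by auto
    then show ?thesis by (simp add: zsum_delta)
  qed
  then have "zsum (\<lambda>k. zsum (\<lambda>m. if g k = m then F k else 0)) = zsum F" by simp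
  then show ?thesis by (simp only: zsum_swap[of "\<lambda>m k. if g k = m then F k else 0"])
qed

lemma zsum_regroup_le:
  fixes W :: "int \<Rightarrow> ennreal"
  assumes mult: "\<And>j. zsum (\<lambda>k. if P k \<and> J k = j then W k else 0) \<le> C"
  shows "zsum (\<lambda>k. if P k then W k * F (J k) else 0) \<le> C * zsum F"
proof -
  have "(if P k then W k * F (J k) else 0) = zsum (\<lambda>j. (if P k \<and> J k = j then W k else 0) * F j)" for k
  proof -
    have "(\<lambda>j. (if P k \<and> J k = j then W k else 0) * F j) = (\<lambda>j. if j = J k then (if P k then W k * F (J k) else 0) else 0)"
      by auto
    then show ?thesis by (simp add: zsum_delta)
  qed
  then have "zsum (\<lambda>k. if P k then W k * F (J k) else 0)
      = zsum (\<lambda>k. zsum (\<lambda>j. (if P k \<and> J k = j then W k else 0) * F j))"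
    by simp
  also have "\<dots> = zsum (\<lambda>j. zsum (\<lambda>k. if P k \<and> J k = j then W k else 0) * F j)"
    by (simp only: zsum_swap[of "\<lambda>k j. (if P k \<and> J k = j then W k else 0) * F j"] zsum_cmult_right)
  also have "\<dots> \<le> zsum (\<lambda>j. C * F j)"
    by (intro zsum_mono mult_right_mono mult) auto
  finally show ?thesis by (simp add: zsum_cmult)
qed

lemma zsum_sum: "zsum (\<lambda>k. \<Sum>i\<in>I. f i k) = (\<Sum>i\<in>I. zsum (f i))"
  unfolding zsum_def by (rule nn_integral_sum) auto

lemma zsum_le_classes:
  fixes f :: "int \<Rightarrow> ennreal" and c d :: "int \<Rightarrow> int"
  assumes I: "finite I" "\<And>k. P k \<Longrightarrow> (c k, d k) \<in> I"
    and class_le: "\<And>a b. zsum (\<lambda>k. if P k \<and> c k = a \<and> d k = b then f k else 0) \<le> B"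
  shows "zsum (\<lambda>k. if P k then f k else 0) \<le> of_nat (card I) * B"
proof -
  let ?g = "\<lambda>i k. if P k \<and> c k = fst i \<and> d k = snd i then f k else 0"
  have "(if P k then f k else 0) \<le> (\<Sum>i\<in>I. ?g i k)" for k
    using I member_le_sum[of "(c k, d k)" I "\<lambda>i. ?g i k"] by auto
  then have "zsum (\<lambda>k. if P k then f k else 0) \<le> (\<Sum>i\<in>I. zsum (?g i))"
    unfolding zsum_sum[symmetric] by (rule zsum_mono)
  also have "\<dots> \<le> (\<Sum>i\<in>I. B)"
    using class_le by (intro sum_mono) auto
  finally show ?thesis by simp
qed

lemma enn_pow_top [simp]: "enn_pow r top = top"
  by (simp add: enn_pow_def)

lemma enn_pow_ennreal: "0 \<le> x \<Longrightarrow> enn_pow r (ennreal x) = ennreal (x powr r)"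
  by (simp add: enn_pow_def)

lemma enn_pow_zero [simp]: "enn_pow r 0 = 0"
  by (simp add: enn_pow_def)

lemma enn_pow_mono:
  assumes "0 \<le> r" "a \<le> b"
  shows "enn_pow r a \<le> enn_pow r b"
proof (cases b)
  case (real y)
  then obtain x where "a = ennreal x" "0 \<le> x" "x \<le> y"
    using assms(2) by (cases a) (auto simp: top_unique)
  then show ?thesis using real assms by (simp add: enn_pow_ennreal powr_mono2)
qed simp

lemma enn_pow_mult:
  assumes "0 < r"
  shows "enn_pow r (a * b) = enn_pow r a * enn_pow r b"
proof (cases a; cases b)
  fix x y assume "a = ennreal x" "0 \<le> x" "b = ennreal y" "0 \<le> y"
  then show ?thesis by (simp add: enn_pow_ennreal powr_mult ennreal_mult'[symmetric])
next
  fix x assume "a = ennreal x" "0 \<le> x" "b = top"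
  then show ?thesis using assms by (cases "x = 0") (simp_all add: enn_pow_ennreal ennreal_mult_top)
next
  fix y assume "a = top" "b = ennreal y" "0 \<le> y"
  then show ?thesis using assms by (cases "y = 0") (simp_all add: enn_pow_ennreal ennreal_top_mult)
next
  assume "a = top" "b = top"
  then show ?thesis by simp
qed

lemma enn_pow_inverse:
  assumes "0 < r"
  shows "enn_pow (1/r) (enn_pow r b) = b" and "enn_pow r (enn_pow (1/r) b) = b"
  using assms by (cases b; simp add: enn_pow_ennreal powr_powr)+

lemma enn_pow_le_self:
  assumes "1 \<le> r" "b \<le> 1"
  shows "enn_pow r b \<le> b"
proof -
  obtain x where "b = ennreal x" "0 \<le> x" "x \<le> 1"
    using assms(2) by (cases b) (auto simp: ennreal_le_1 top_unique)
  then show ?thesis using assms(1) by (simp add: enn_pow_ennreal) (metis powr_one powr_mono')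
qed

lemma enn_pow_add_le:
  assumes "0 < r"
  shows "enn_pow r (a + b) \<le> ennreal (2 powr r) * (enn_pow r a + enn_pow r b)"
proof -
  have "a + b \<le> 2 * max a b"
    by (auto simp: max_def mult_2 intro: add_mono)
  then have "enn_pow r (a + b) \<le> enn_pow r 2 * enn_pow r (max a b)"
    using assms by (simp add: enn_pow_mono enn_pow_mult[symmetric])
  also have "enn_pow r 2 = ennreal (2 powr r)"
    using enn_pow_ennreal[of 2 r] by simp
  also have "enn_pow r (max a b) \<le> enn_pow r a + enn_pow r b"
    by (cases "a \<le> b") (auto simp: max_def add_increasing add_increasing2)
  finally show ?thesis by (simp add: mult_left_mono)
qed

lemma enn_pow_weighted_add_le:
  assumes P: "1 \<le> P" and a: "0 \<le> a" "a \<le> 1" and b: "0 \<le> b" "b \<le> 1" and S: "0 < S"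
  shows "enn_pow P (c * (ennreal a * G + ennreal (S * b) * H))
    \<le> enn_pow P c * ennreal (2 powr P) * (ennreal a * enn_pow P G + ennreal (S powr P) * (ennreal b * enn_pow P H))"
proof -
  have P0: "0 < P" using P by simp
  have a_le: "enn_pow P (ennreal a) \<le> ennreal a" and b_le: "enn_pow P (ennreal b) \<le> ennreal b"
    using P a b by (auto intro!: enn_pow_le_self simp: ennreal_le_1)
  have "enn_pow P (c * (ennreal a * G + ennreal (S * b) * H)) = enn_pow P c * enn_pow P (ennreal a * G + ennreal (S * b) * H)"
    by (rule enn_pow_mult[OF P0])
  also have "\<dots> \<le> enn_pow P c * (ennreal (2 powr P) * (enn_pow P (ennreal a * G) + enn_pow P (ennreal (S * b) * H)))"
    by (intro mult_left_mono enn_pow_add_le P0) simp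
  also have "enn_pow P (ennreal a * G) \<le> ennreal a * enn_pow P G"
    using a_le by (simp add: enn_pow_mult[OF P0] mult_right_mono)
  also have "enn_pow P (ennreal (S * b) * H) \<le> ennreal (S powr P) * (ennreal b * enn_pow P H)"
  proof -
    have "enn_pow P (ennreal (S * b)) = ennreal ((S * b) powr P)"
      using S b by (intro enn_pow_ennreal) simp
    also have "\<dots> = ennreal (S powr P) * enn_pow P (ennreal b)"
      using S b by (simp add: powr_mult ennreal_mult enn_pow_ennreal)
    finally have "enn_pow P (ennreal (S * b)) = ennreal (S powr P) * enn_pow P (ennreal b)" .
    then show ?thesis
      using b_le by (simp add: enn_pow_mult[OF P0] mult.assoc mult_left_mono mult_right_mono)
  qed
  finally show ?thesis by (simp add: mult_left_mono add_mono mult.assoc)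
qed

lemma zsum_enn_pow_le:
  assumes "1 \<le> r"
  shows "zsum (\<lambda>k. enn_pow r (f k)) \<le> enn_pow r (zsum f)"
proof (cases "zsum f")
  case (real T)
  \<comment> \<open>each term is at most the total T, so its r-th power is at most the term times T^(r-1)\<close>
  have "enn_pow r (f k) \<le> f k * ennreal (T powr (r - 1))" for k
  proof -
    obtain y where y: "f k = ennreal y" "0 \<le> y" "y \<le> T"
      using zsum_upper[of f k] real by (cases "f k") (auto simp: top_unique)
    have "y powr r \<le> y * T powr (r - 1)"
    proof (cases "y = 0")
      case False
      then have "y powr r = y * y powr (r - 1)"
        using powr_add[of y 1 "r - 1"] y(2) by simp
      also have "\<dots> \<le> y * T powr (r - 1)"
        using y assms by (intro mult_left_mono powr_mono2) auto
      finally show ?thesis .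
    qed simp
    then show ?thesis
      using y by (simp add: enn_pow_ennreal ennreal_mult[symmetric])
  qed
  then have "zsum (\<lambda>k. enn_pow r (f k)) \<le> zsum (\<lambda>k. f k * ennreal (T powr (r - 1)))"
    by (rule zsum_mono)
  also have "\<dots> = ennreal (T * T powr (r - 1))"
    using real by (simp add: zsum_cmult_right ennreal_mult)
  also have "\<dots> = enn_pow r (zsum f)"
    using real assms by (cases "T = 0") (simp_all add: enn_pow_ennreal powr_diff)
  finally show ?thesis .
qed simp

lemma ennreal_ge_1_cases:
  assumes "1 \<le> (p::ennreal)"
  obtains "p = top" | P where "p = ennreal P" "1 \<le> P"
proof (cases p)
  case (real P)
  then have "1 \<le> P" using assms by (simp add: ennreal_1[symmetric] del: ennreal_1)
  then show ?thesis using real that by simp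
qed (use that in simp)

lemma lp_enn_finite: "1 \<le> P \<Longrightarrow> lp_enn (ennreal P) b = enn_pow (1/P) (zsum (\<lambda>k. enn_pow P (b k)))"
  by (simp add: lp_enn_def infsum_eq_zsum)

lemma lp_enn_top: "lp_enn top b = (SUP k. b k)"
  by (simp add: lp_enn_def)

lemma enn_pow_lp_enn: "1 \<le> P \<Longrightarrow> enn_pow P (lp_enn (ennreal P) b) = zsum (\<lambda>k. enn_pow P (b k))"
  by (simp add: lp_enn_finite enn_pow_inverse)

lemma lp_enn_upper:
  assumes "1 \<le> p"
  shows "b k \<le> lp_enn p b"
  using assms
proof (cases rule: ennreal_ge_1_cases)
  case 1 then show ?thesis by (simp add: lp_enn_top SUP_upper)
next
  case (2 P)
  have "enn_pow (1/P) (enn_pow P (b k)) \<le> enn_pow (1/P) (zsum (\<lambda>k. enn_pow P (b k)))"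
    using 2 by (intro enn_pow_mono zsum_upper) auto
  then show ?thesis using 2 by (simp add: lp_enn_finite enn_pow_inverse)
qed

lemma lp_enn_le_zsum:
  assumes "1 \<le> p"
  shows "lp_enn p b \<le> zsum b"
  using assms
proof (cases rule: ennreal_ge_1_cases)
  case 1 then show ?thesis by (simp add: lp_enn_top SUP_least zsum_upper)
next
  case (2 P)
  have "enn_pow (1/P) (zsum (\<lambda>k. enn_pow P (b k))) \<le> enn_pow (1/P) (enn_pow P (zsum b))"
    using 2 by (intro enn_pow_mono zsum_enn_pow_le) auto
  then show ?thesis using 2 by (simp add: lp_enn_finite enn_pow_inverse)
qed

lemma lp_enn_le_scaled:
  assumes "1 \<le> P" "0 \<le> D"
    and "zsum (\<lambda>k. enn_pow P (a k)) \<le> ennreal D * zsum (\<lambda>k. enn_pow P (b k))"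
  shows "lp_enn (ennreal P) a \<le> ennreal (D powr (1/P)) * lp_enn (ennreal P) b"
proof -
  have "lp_enn (ennreal P) a \<le> enn_pow (1/P) (ennreal D * zsum (\<lambda>k. enn_pow P (b k)))"
    unfolding lp_enn_finite[OF assms(1)] using assms by (intro enn_pow_mono) auto
  also have "\<dots> = ennreal (D powr (1/P)) * lp_enn (ennreal P) b"
    unfolding lp_enn_finite[OF assms(1)] using assms by (simp add: enn_pow_mult enn_pow_ennreal)
  finally show ?thesis .
qed

lemma ennreal_div_eq_mult: "0 < c \<Longrightarrow> a / ennreal c = a * ennreal (1 / c)"
  by (simp add: divide_ennreal_def inverse_ennreal inverse_eq_divide)

lemma ennreal_mult3: "0 \<le> a \<Longrightarrow> 0 \<le> b \<Longrightarrow> 0 \<le> c \<Longrightarrow> ennreal (a * b * c) = ennreal a * ennreal b * ennreal c"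
  by (simp add: ennreal_mult)

lemma ennreal_mult_add:
  fixes a b c A B :: real
  assumes "0 \<le> A" "0 \<le> B" "0 \<le> b" "0 \<le> c" "0 \<le> a"
  shows "ennreal (c * (a * A + b * B)) = ennreal c * (ennreal a * ennreal A + ennreal b * ennreal B)"
proof -
  have "ennreal (a * A + b * B) = ennreal (a * A) + ennreal (b * B)"
    using assms by (intro ennreal_plus) auto
  then show ?thesis using assms by (simp add: ennreal_mult)
qed

lemma equiv_normsI:
  assumes "\<exists>C>0. \<forall>x. N x \<le> ennreal C * M x" "\<exists>C>0. \<forall>x. M x \<le> ennreal C * N x"
  shows "equiv_norms N M"
proof -
  obtain A B where A: "0 < A" "\<And>x. N x \<le> ennreal A * M x" and B: "0 < B" "\<And>x. M x \<le> ennreal B * N x"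
    using assms by blast
  have "ennreal (1 / A) * N x \<le> M x" for x
  proof -
    have "ennreal (1 / A) * N x \<le> ennreal (1 / A) * (ennreal A * M x)"
      using A by (intro mult_left_mono) auto
    also have "\<dots> = M x"
      using A by (simp add: mult.assoc[symmetric] ennreal_mult[symmetric])
    finally show ?thesis .
  qed
  then show ?thesis
    unfolding equiv_norms_def using A B by (intro exI[of _ "1 / A"] exI[of _ B]) auto
qed

lemma zsum_le_geometric_right:
  fixes w :: "int \<Rightarrow> real" and A r :: real
  assumes r: "0 \<le> r" "r < 1" and A: "0 \<le> A"
    and bdd: "\<And>k. k \<in> G \<Longrightarrow> L \<le> k"
    and le_A: "\<And>k. k \<in> G \<Longrightarrow> w k \<le> A"
    and decay: "\<And>k k'. k \<in> G \<Longrightarrow> k' \<in> G \<Longrightarrow> k < k' \<Longrightarrow> w k' \<le> A * r ^ nat (k' - k)"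
  shows "zsum (\<lambda>k. if k \<in> G then ennreal (w k) else 0) \<le> ennreal (A / (1 - r))"
proof (cases "G = {}")
  case True then show ?thesis by (simp add: zsum_def)
next
  case False
  then obtain k0 where k0: "k0 \<in> G" "\<And>k. k \<in> G \<Longrightarrow> nat (k0 - L) \<le> nat (k - L)"
    using ex_has_least_nat[of "\<lambda>k. k \<in> G" _ "\<lambda>k. nat (k - L)"] by blast
  have least: "k0 \<le> k" if "k \<in> G" for k
    using k0(2)[OF that] bdd[OF that] bdd[OF k0(1)] by linarith
  have "w k \<le> A * r ^ nat (k - k0)" if "k \<in> G" for k
    using decay[OF k0(1) that] le_A[OF k0(1)] least[OF that] by (cases "k = k0") auto
  then have "zsum (\<lambda>k. if k \<in> G then ennreal (w k) else 0)
      \<le> zsum (\<lambda>k. if k0 \<le> k then ennreal (A * r ^ nat (k - k0)) else 0)"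
    using least by (intro zsum_mono) (auto intro: ennreal_leI)
  also have "\<dots> = (\<Sum>n. ennreal (A * r ^ n))"
    by (rule zsum_shift_nat)
  also have "\<dots> = ennreal (A * (1 / (1 - r)))"
    using r A by (intro suminf_ennreal_eq sums_mult geometric_sums) auto
  finally show ?thesis by simp
qed

lemma zsum_le_geometric_left:
  fixes w :: "int \<Rightarrow> real" and A r :: real
  assumes r: "0 \<le> r" "r < 1" and A: "0 \<le> A"
    and bdd: "\<And>k. k \<in> G \<Longrightarrow> k \<le> U"
    and le_A: "\<And>k. k \<in> G \<Longrightarrow> w k \<le> A"
    and decay: "\<And>k k'. k \<in> G \<Longrightarrow> k' \<in> G \<Longrightarrow> k < k' \<Longrightarrow> w k \<le> A * r ^ nat (k' - k)"
  shows "zsum (\<lambda>k. if k \<in> G then ennreal (w k) else 0) \<le> ennreal (A / (1 - r))"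
proof -
  have "zsum (\<lambda>k. if k \<in> G then ennreal (w k) else 0)
      = zsum (\<lambda>k. if k \<in> uminus ` G then ennreal (w (- k)) else 0)"
    by (subst zsum_reflect[symmetric]) (auto intro!: arg_cong[where f=zsum] simp: image_iff)
  also have "\<dots> \<le> ennreal (A / (1 - r))"
  proof (rule zsum_le_geometric_right[OF r A, where L="- U"])
    fix k k' assume "k \<in> uminus ` G" "k' \<in> uminus ` G" "k < k'"
    then show "w (- k') \<le> A * r ^ nat (k' - k)"
      using decay[of "- k'" "- k"] by auto
  qed (use bdd le_A in auto)
  finally show ?thesis .
qed

lemma zsum_le_8_of_decay:
  fixes w :: "int \<Rightarrow> real"
  assumes bdd: "\<And>k. k \<in> G \<Longrightarrow> L \<le> k \<and> k \<le> U" and w1: "\<And>k. w k \<le> 1"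
    and decay: "(\<forall>k\<in>G. \<forall>k'\<in>G. k < k' \<longrightarrow> w k' \<le> 4 * (1/2) ^ nat (k' - k))
              \<or> (\<forall>k\<in>G. \<forall>k'\<in>G. k < k' \<longrightarrow> w k \<le> 4 * (1/2) ^ nat (k' - k))"
  shows "zsum (\<lambda>k. if k \<in> G then ennreal (w k) else 0) \<le> 8"
proof -
  have w4: "w k \<le> 4" for k using w1[of k] by linarith
  have "zsum (\<lambda>k. if k \<in> G then ennreal (w k) else 0) \<le> ennreal (4 / (1 - 1/2))"
    using decay
  proof
    assume "\<forall>k\<in>G. \<forall>k'\<in>G. k < k' \<longrightarrow> w k' \<le> 4 * (1/2) ^ nat (k' - k)"
    then show ?thesis by (intro zsum_le_geometric_right[where L = L]) (use bdd w4 in auto)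
  next
    assume "\<forall>k\<in>G. \<forall>k'\<in>G. k < k' \<longrightarrow> w k \<le> 4 * (1/2) ^ nat (k' - k)"
    then show ?thesis by (intro zsum_le_geometric_left[where U = U]) (use bdd w4 in auto)
  qed
  then show ?thesis by simp
qed

lemma strongly_inc_pos: "strongly_inc a \<Longrightarrow> 0 < a k"
  by (simp add: strongly_inc_def)

lemma strongly_inc_pow:
  assumes "strongly_inc a" "j \<le> j'"
  shows "2 ^ nat (j' - j) * a j \<le> a j'"
proof -
  have "2 ^ n * a j \<le> a (j + int n)" for n j
  proof (induction n)
    case (Suc n)
    have "2 ^ Suc n * a j \<le> 2 * a (j + int n)" using Suc.IH by simp
    also have "\<dots> \<le> a (j + int n + 1)" using assms(1) unfolding strongly_inc_def by blast
    finally show ?case by (simp add: ac_simps)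
  qed simp
  from this[of "nat (j' - j)" j] show ?thesis using assms(2) by simp
qed

lemma strongly_dec_pow:
  assumes "strongly_dec a" "j \<le> j'"
  shows "2 ^ nat (j' - j) * a j' \<le> a j"
proof -
  have "2 ^ n * a (j + int n) \<le> a j" for n j
  proof (induction n)
    case (Suc n)
    have "2 ^ Suc n * a (j + int (Suc n)) = 2 ^ n * (2 * a (j + int n + 1))" by (simp add: ac_simps)
    also have "\<dots> \<le> 2 ^ n * a (j + int n)"
      using assms(1) unfolding strongly_dec_def by (intro mult_left_mono) (auto simp: field_simps)
    also have "\<dots> \<le> a j" using Suc.IH .
    finally show ?case .
  qed simp
  from this[of "nat (j' - j)" j] show ?thesis using assms(2) by simp
qed

lemma strongly_inc_mono:
  assumes "strongly_inc a" "j \<le> j'"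
  shows "a j \<le> a j'"
proof -
  have "1 * a j \<le> 2 ^ nat (j' - j) * a j"
    using strongly_inc_pos[OF assms(1), of j] by (intro mult_right_mono) auto
  then show ?thesis using strongly_inc_pow[OF assms] by simp
qed

lemma strongly_inc_bounded_above:
  assumes "strongly_inc a"
  shows "\<exists>U. \<forall>j. a j \<le> T \<longrightarrow> j \<le> U"
proof -
  have a0: "0 < a 0" using strongly_inc_pos[OF assms] .
  obtain n :: nat where n: "T / a 0 < 2 ^ n" using real_arch_pow[of 2 "T / a 0"] by auto
  have "j \<le> int n" if "a j \<le> T" for j
  proof (rule ccontr)
    assume "\<not> j \<le> int n"
    then have "2 ^ n * a 0 \<le> 2 ^ nat j * a 0"
      using a0 by (intro mult_right_mono power_increasing) auto
    also have "\<dots> \<le> a j" using strongly_inc_pow[OF assms, of 0 j] \<open>\<not> j \<le> int n\<close> by simp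
    finally show False using that n a0 by (simp add: field_simps)
  qed
  then show ?thesis by blast
qed

lemma strongly_inc_bounded_below:
  assumes "strongly_inc a" "0 < T"
  shows "\<exists>L. \<forall>j. T \<le> a j \<longrightarrow> L \<le> j"
proof -
  obtain n :: nat where n: "a 0 / T < 2 ^ n" using real_arch_pow[of 2 "a 0 / T"] by auto
  have "- int n \<le> j" if "T \<le> a j" for j
  proof (rule ccontr)
    assume "\<not> - int n \<le> j"
    then have "2 ^ n * T \<le> 2 ^ nat (0 - j) * a j"
      using that assms(2) by (intro mult_mono power_increasing) auto
    also have "\<dots> \<le> a 0" using strongly_inc_pow[OF assms(1), of j 0] \<open>\<not> - int n \<le> j\<close> by simp
    finally show False using n assms(2) by (simp add: field_simps)
  qed
  then show ?thesis by blast
qed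

definition cell :: "(int \<Rightarrow> real) \<Rightarrow> real \<Rightarrow> int" where
  "cell a t = (THE j. a j \<le> t \<and> t < a (j + 1))"

lemma cell_unique:
  assumes "strongly_inc a" "a j \<le> t" "t < a (j + 1)" "a j' \<le> t" "t < a (j' + 1)"
  shows "j = j'"
proof (rule ccontr)
  assume "j \<noteq> j'"
  then have "a (j + 1) \<le> a j' \<or> a (j' + 1) \<le> a j"
    using strongly_inc_mono[OF assms(1)] by (meson linorder_neqE_linordered_idom zless_imp_add1_zle)
  then show False using assms by linarith
qed

lemma cell_bounds:
  assumes "strongly_inc a" "0 < t"
  shows "a (cell a t) \<le> t" "t < a (cell a t + 1)"
proof -
  obtain U where U: "\<And>j. a j \<le> t \<Longrightarrow> j \<le> U" using strongly_inc_bounded_above[OF assms(1)] by blast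
  obtain L where L: "\<And>j. t \<le> a j \<Longrightarrow> L \<le> j" using strongly_inc_bounded_below[OF assms] by blast
  define A where "A = {j. a j \<le> t} \<inter> {L - 1..U}"
  have "a (L - 1) \<le> t" using L[of "L - 1"] by force
  then have fin: "finite A" "A \<noteq> {}" unfolding A_def using U by auto
  define j where "j = Max A"
  have j: "j \<in> A" "\<And>i. i \<in> A \<Longrightarrow> i \<le> j"
    using Max_in[OF fin] Max_ge[OF fin(1)] unfolding j_def by auto
  have "t < a (j + 1)"
  proof (rule ccontr)
    assume "\<not> t < a (j + 1)"
    then have "j + 1 \<in> A" using j(1) U[of "j + 1"] unfolding A_def by auto
    then show False using j(2) by fastforce
  qed
  then have "\<exists>j. a j \<le> t \<and> t < a (j + 1)"
    using j(1) unfolding A_def by auto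
  then have "\<exists>!j. a j \<le> t \<and> t < a (j + 1)"
    using cell_unique[OF assms(1)] by blast
  then have "a (cell a t) \<le> t \<and> t < a (cell a t + 1)"
    unfolding cell_def by (rule theI')
  then show "a (cell a t) \<le> t" "t < a (cell a t + 1)" by auto
qed

section \<open>Quasi-concave functions and discretizing sequences\<close>

lemma qconcave_pos: "qconcave \<psi> \<Longrightarrow> 0 < t \<Longrightarrow> 0 < \<psi> t"
  by (simp add: qconcave_def)

lemma qconcave_mono: "qconcave \<psi> \<Longrightarrow> 0 < t \<Longrightarrow> t \<le> t' \<Longrightarrow> \<psi> t \<le> \<psi> t'"
  unfolding qconcave_def by (auto simp: mono_on_def)

lemma qconcave_ratio_antimono:
  assumes "qconcave \<psi>" "0 < t" "t \<le> t'"
  shows "\<psi> t' / t' \<le> \<psi> t / t"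
  using assms monotone_onD[of "{0<..}" "(\<le>)" "(\<ge>)" "\<lambda>t. \<psi> t / t" t t']
  by (simp add: qconcave_def)

lemma qconcave_min_le:
  assumes "qconcave \<psi>" "0 < s" "0 < t"
  shows "min 1 (s / t) * \<psi> t \<le> \<psi> s"
proof (cases "t \<le> s")
  case True
  then have "min 1 (s / t) = 1" using assms by (simp add: min_def field_simps)
  then show ?thesis using qconcave_mono[OF assms(1,3) True] by simp
next
  case False
  then have "\<psi> t / t \<le> \<psi> s / s" using qconcave_ratio_antimono[OF assms(1,2)] by simp
  then have "s / t * \<psi> t \<le> \<psi> s" using assms by (simp add: field_simps)
  then show ?thesis using False assms by (simp add: min_def)
qed

text \<open>A set Z satisfying discretizing_split is the part Z_1 of the partition of the integers
  in the definition of a discretizing sequence; its complement is Z_2.\<close>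

definition discretizing_split :: "(int \<Rightarrow> real) \<Rightarrow> (real \<Rightarrow> real) \<Rightarrow> int set \<Rightarrow> bool" where
  "discretizing_split \<sigma> \<psi> Z \<longleftrightarrow> (\<forall>k.
     (k \<in> Z \<longrightarrow> \<psi> (\<sigma> (k + 1)) \<le> 2 * \<psi> (\<sigma> k)) \<and>
     (k \<notin> Z \<longrightarrow> \<psi> (\<sigma> k) / \<sigma> k \<le> 2 * (\<psi> (\<sigma> (k + 1)) / \<sigma> (k + 1))))"

lemma discretizing_split_exists:
  assumes "discretizing \<sigma> \<psi>"
  shows "\<exists>Z. discretizing_split \<sigma> \<psi> Z"
proof -
  obtain Z1 Z2 where "Z1 \<union> Z2 = UNIV" "\<forall>k\<in>Z1. \<psi> (\<sigma> (k + 1)) \<le> 2 * \<psi> (\<sigma> k)"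
    "\<forall>k\<in>Z2. \<psi> (\<sigma> k) / \<sigma> k \<le> 2 * (\<psi> (\<sigma> (k + 1)) / \<sigma> (k + 1))"
    using assms unfolding discretizing_def by blast
  then have "discretizing_split \<sigma> \<psi> Z1"
    unfolding discretizing_split_def by blast
  then show ?thesis ..
qed

lemma cell_flat_in_split:
  assumes \<psi>: "qconcave \<psi>" and \<sigma>: "strongly_inc \<sigma>" and Z: "discretizing_split \<sigma> \<psi> Z"
    and t: "0 < t" "0 < t'" and c: "cell \<sigma> t = c" "cell \<sigma> t' = c" "c \<in> Z"
  shows "\<psi> t' \<le> 2 * \<psi> t"
proof -
  have "\<sigma> c \<le> t" "t' \<le> \<sigma> (c + 1)"
    using cell_bounds[OF \<sigma> t(1)] cell_bounds[OF \<sigma> t(2)] c by auto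
  have "\<psi> t' \<le> \<psi> (\<sigma> (c + 1))"
    by (rule qconcave_mono[OF \<psi> t(2) \<open>t' \<le> \<sigma> (c + 1)\<close>])
  also have "\<dots> \<le> 2 * \<psi> (\<sigma> c)"
    using Z c(3) unfolding discretizing_split_def by blast
  also have "\<psi> (\<sigma> c) \<le> \<psi> t"
    by (rule qconcave_mono[OF \<psi> strongly_inc_pos[OF \<sigma>] \<open>\<sigma> c \<le> t\<close>])
  finally show ?thesis by simp
qed

lemma cell_flat_not_in_split:
  assumes \<psi>: "qconcave \<psi>" and \<sigma>: "strongly_inc \<sigma>" and Z: "discretizing_split \<sigma> \<psi> Z"
    and t: "0 < t" "0 < t'" and c: "cell \<sigma> t = c" "cell \<sigma> t' = c" "c \<notin> Z"
  shows "\<psi> t / t \<le> 2 * (\<psi> t' / t')"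
proof -
  have "\<sigma> c \<le> t" "t' \<le> \<sigma> (c + 1)"
    using cell_bounds[OF \<sigma> t(1)] cell_bounds[OF \<sigma> t(2)] c by auto
  have "\<psi> t / t \<le> \<psi> (\<sigma> c) / \<sigma> c"
    by (rule qconcave_ratio_antimono[OF \<psi> strongly_inc_pos[OF \<sigma>] \<open>\<sigma> c \<le> t\<close>])
  also have "\<dots> \<le> 2 * (\<psi> (\<sigma> (c + 1)) / \<sigma> (c + 1))"
    using Z c(3) unfolding discretizing_split_def by blast
  also have "\<psi> (\<sigma> (c + 1)) / \<sigma> (c + 1) \<le> \<psi> t' / t'"
    by (rule qconcave_ratio_antimono[OF \<psi> t(2) \<open>t' \<le> \<sigma> (c + 1)\<close>])
  finally show ?thesis by simp
qed

text \<open>The good index of t is the end point of the cell of t at which the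
  quasi-concave \<psi> is comparable to its value at t: the right end point on Z_1,
  where \<psi> is almost constant, and the left one on Z_2, where \<psi> is almost linear.\<close>

definition good_index :: "(int \<Rightarrow> real) \<Rightarrow> int set \<Rightarrow> real \<Rightarrow> int" where
  "good_index \<sigma> Z t = cell \<sigma> t + (if cell \<sigma> t \<in> Z then 1 else 0)"

lemma good_index_bound:
  assumes \<psi>: "qconcave \<psi>" and \<sigma>: "strongly_inc \<sigma>" and Z: "discretizing_split \<sigma> \<psi> Z" and t: "0 < t"
  shows "1 / (2 * \<psi> t) \<le> min 1 (\<sigma> (good_index \<sigma> Z t) / t) / \<psi> (\<sigma> (good_index \<sigma> Z t))"
proof -
  define c where "c = cell \<sigma> t"
  have c: "\<sigma> c \<le> t" "t < \<sigma> (c + 1)" using cell_bounds[OF \<sigma> t] unfolding c_def by auto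
  have pos: "0 < \<psi> t" "0 < \<sigma> j" "0 < \<psi> (\<sigma> j)" for j
    using qconcave_pos[OF \<psi>] strongly_inc_pos[OF \<sigma>] t by auto
  show ?thesis
  proof (cases "c \<in> Z")
    case True
    have "\<psi> (\<sigma> (c + 1)) \<le> 2 * \<psi> (\<sigma> c)" using Z True unfolding discretizing_split_def by blast
    also have "\<psi> (\<sigma> c) \<le> \<psi> t" using qconcave_mono[OF \<psi> pos(2) c(1)] .
    finally show ?thesis
      using True c t pos(1) pos(2,3)[of "c + 1"] by (simp add: good_index_def c_def[symmetric] min_def field_simps)
  next
    case False
    have "\<psi> (\<sigma> c) / \<sigma> c \<le> 2 * (\<psi> (\<sigma> (c + 1)) / \<sigma> (c + 1))"
      using Z False unfolding discretizing_split_def by blast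
    also have "\<psi> (\<sigma> (c + 1)) / \<sigma> (c + 1) \<le> \<psi> t / t"
      using qconcave_ratio_antimono[OF \<psi> t] c(2) by simp
    finally show ?thesis
      using False c t pos(1) pos(2,3)[of c] by (simp add: good_index_def c_def[symmetric] min_def field_simps)
  qed
qed

definition geo_const :: real where
  "geo_const = 1 / (1 - sqrt (1/2))"

lemma sqrt_half_bounds: "0 \<le> sqrt (1/2::real)" "sqrt (1/2::real) < 1"
  by auto

lemma geo_const_pos: "0 < geo_const"
  unfolding geo_const_def using sqrt_half_bounds by simp

lemma sqrt_le_geometric:
  fixes X Y :: real
  assumes "0 \<le> Y" "2 ^ d * Y \<le> X"
  shows "sqrt Y \<le> sqrt X * sqrt (1/2) ^ d"
proof -
  have "Y \<le> X * (1/2) ^ d" using assms by (simp add: field_simps power_one_over)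
  then have "sqrt Y \<le> sqrt (X * (1/2) ^ d)" by (rule real_sqrt_le_mono)
  then show ?thesis by (simp add: real_sqrt_mult real_sqrt_power)
qed

lemma zsum_sqrt_le_geometric_right:
  fixes v :: "int \<Rightarrow> real"
  assumes bdd: "\<And>k. k \<in> G \<Longrightarrow> L \<le> k" and A: "0 \<le> A"
    and v: "\<And>k. k \<in> G \<Longrightarrow> 0 \<le> v k" "\<And>k. k \<in> G \<Longrightarrow> v k \<le> A"
    and decay: "\<And>k k'. k \<in> G \<Longrightarrow> k' \<in> G \<Longrightarrow> k < k' \<Longrightarrow> 2 ^ nat (k' - k) * v k' \<le> v k"
  shows "zsum (\<lambda>k. if k \<in> G then ennreal (sqrt (v k)) else 0) \<le> ennreal (geo_const * sqrt A)"
proof -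
  have "zsum (\<lambda>k. if k \<in> G then ennreal (sqrt (v k)) else 0) \<le> ennreal (sqrt A / (1 - sqrt (1/2)))"
  proof (rule zsum_le_geometric_right[OF sqrt_half_bounds, where L = L])
    fix k k' assume kk: "k \<in> G" "k' \<in> G" "k < k'"
    then have "sqrt (v k') \<le> sqrt (v k) * sqrt (1/2) ^ nat (k' - k)"
      using v decay by (intro sqrt_le_geometric) auto
    also have "\<dots> \<le> sqrt A * sqrt (1/2) ^ nat (k' - k)"
      using v kk by (intro mult_right_mono) auto
    finally show "sqrt (v k') \<le> sqrt A * sqrt (1/2) ^ nat (k' - k)" .
  qed (use bdd A v in auto)
  then show ?thesis by (simp add: geo_const_def)
qed

lemma zsum_sqrt_le_geometric_left:
  fixes v :: "int \<Rightarrow> real"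
  assumes bdd: "\<And>k. k \<in> G \<Longrightarrow> k \<le> U" and A: "0 \<le> A"
    and v: "\<And>k. k \<in> G \<Longrightarrow> 0 \<le> v k" "\<And>k. k \<in> G \<Longrightarrow> v k \<le> A"
    and growth: "\<And>k k'. k \<in> G \<Longrightarrow> k' \<in> G \<Longrightarrow> k < k' \<Longrightarrow> 2 ^ nat (k' - k) * v k \<le> v k'"
  shows "zsum (\<lambda>k. if k \<in> G then ennreal (sqrt (v k)) else 0) \<le> ennreal (geo_const * sqrt A)"
proof -
  have "zsum (\<lambda>k. if k \<in> G then ennreal (sqrt (v k)) else 0) \<le> ennreal (sqrt A / (1 - sqrt (1/2)))"
  proof (rule zsum_le_geometric_left[OF sqrt_half_bounds, where U = U])
    fix k k' assume kk: "k \<in> G" "k' \<in> G" "k < k'"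
    then have "sqrt (v k) \<le> sqrt (v k') * sqrt (1/2) ^ nat (k' - k)"
      using v growth by (intro sqrt_le_geometric) auto
    also have "\<dots> \<le> sqrt A * sqrt (1/2) ^ nat (k' - k)"
      using v kk by (intro mult_right_mono) auto
    finally show "sqrt (v k) \<le> sqrt A * sqrt (1/2) ^ nat (k' - k)" .
  qed (use bdd A v in auto)
  then show ?thesis by (simp add: geo_const_def)
qed

lemma zsum_inv_sqrt_above_le:
  assumes \<psi>: "qconcave \<psi>" and \<sigma>: "strongly_inc \<sigma>" and inc: "strongly_inc (\<lambda>j. \<psi> (\<sigma> j))" and t: "0 < t"
  shows "zsum (\<lambda>j. if t \<le> \<sigma> j then ennreal (1 / sqrt (\<psi> (\<sigma> j))) else 0) \<le> ennreal (geo_const / sqrt (\<psi> t))"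
proof -
  obtain L where L: "\<And>j. t \<le> \<sigma> j \<Longrightarrow> L \<le> j" using strongly_inc_bounded_below[OF \<sigma> t] by blast
  have pt: "0 < \<psi> t" using qconcave_pos[OF \<psi> t] .
  have ge: "\<psi> t \<le> \<psi> (\<sigma> j)" if "t \<le> \<sigma> j" for j using qconcave_mono[OF \<psi> t that] .
  have "zsum (\<lambda>j. if j \<in> {j. t \<le> \<sigma> j} then ennreal (sqrt (1 / \<psi> (\<sigma> j))) else 0)
      \<le> ennreal (geo_const * sqrt (1 / \<psi> t))"
  proof (rule zsum_sqrt_le_geometric_right[where L = L])
    fix k k' assume kk: "k \<in> {j. t \<le> \<sigma> j}" "k' \<in> {j. t \<le> \<sigma> j}" "k < k'"
    have "2 ^ nat (k' - k) * \<psi> (\<sigma> k) \<le> \<psi> (\<sigma> k')" using strongly_inc_pow[OF inc, of k k'] kk by simp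
    then show "2 ^ nat (k' - k) * (1 / \<psi> (\<sigma> k')) \<le> 1 / \<psi> (\<sigma> k)"
      using pt ge[of k] ge[of k'] kk by (simp add: field_simps)
  next
    fix k assume "k \<in> {j. t \<le> \<sigma> j}"
    then show "0 \<le> 1 / \<psi> (\<sigma> k)" using pt ge[of k] by simp
  next
    fix k assume "k \<in> {j. t \<le> \<sigma> j}"
    then show "1 / \<psi> (\<sigma> k) \<le> 1 / \<psi> t" using pt ge[of k] by (intro frac_le) auto
  qed (use L pt in auto)
  then show ?thesis by (simp add: real_sqrt_divide cong: if_cong)
qed

lemma zsum_sqrt_ratio_below_le:
  assumes \<psi>: "qconcave \<psi>" and \<sigma>: "strongly_inc \<sigma>" and dec: "strongly_dec (\<lambda>j. \<psi> (\<sigma> j) / \<sigma> j)" and t: "0 < t"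
  shows "zsum (\<lambda>j. if \<sigma> j \<le> t then ennreal (sqrt (\<sigma> j / \<psi> (\<sigma> j))) else 0) \<le> ennreal (geo_const * sqrt (t / \<psi> t))"
proof -
  obtain U where U: "\<And>j. \<sigma> j \<le> t \<Longrightarrow> j \<le> U" using strongly_inc_bounded_above[OF \<sigma>] by blast
  have pos: "0 < \<psi> t" "0 < \<sigma> j" "0 < \<psi> (\<sigma> j)" for j
    using qconcave_pos[OF \<psi>] strongly_inc_pos[OF \<sigma>] t by auto
  have le: "\<sigma> j / \<psi> (\<sigma> j) \<le> t / \<psi> t" if "\<sigma> j \<le> t" for j
    using qconcave_ratio_antimono[OF \<psi> pos(2) that] pos t by (simp add: field_simps)
  have "zsum (\<lambda>j. if j \<in> {j. \<sigma> j \<le> t} then ennreal (sqrt (\<sigma> j / \<psi> (\<sigma> j))) else 0)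
      \<le> ennreal (geo_const * sqrt (t / \<psi> t))"
  proof (rule zsum_sqrt_le_geometric_left[where U = U])
    fix k k' assume kk: "k \<in> {j. \<sigma> j \<le> t}" "k' \<in> {j. \<sigma> j \<le> t}" "k < k'"
    have "2 ^ nat (k' - k) * (\<psi> (\<sigma> k') / \<sigma> k') \<le> \<psi> (\<sigma> k) / \<sigma> k"
      using strongly_dec_pow[OF dec, of k k'] kk by simp
    then show "2 ^ nat (k' - k) * (\<sigma> k / \<psi> (\<sigma> k)) \<le> \<sigma> k' / \<psi> (\<sigma> k')"
      using pos(2,3)[of k] pos(2,3)[of k'] by (simp add: field_simps)
  qed (use U pos t le in \<open>auto simp: less_imp_le\<close>)
  then show ?thesis by simp
qed

lemma zsum_sqrt_min_ratio_le:
  assumes \<psi>: "qconcave \<psi>" and d: "discretizing \<sigma> \<psi>" and t: "0 < t"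
  shows "zsum (\<lambda>j. ennreal (sqrt (min 1 (\<sigma> j / t) / \<psi> (\<sigma> j)))) \<le> ennreal (2 * geo_const / sqrt (\<psi> t))"
proof -
  have \<sigma>: "strongly_inc \<sigma>" and inc: "strongly_inc (\<lambda>j. \<psi> (\<sigma> j))"
    and dec: "strongly_dec (\<lambda>j. \<psi> (\<sigma> j) / \<sigma> j)" using d by (auto simp: discretizing_def)
  have pt: "0 < \<psi> t" using qconcave_pos[OF \<psi> t] .
  have sp: "0 < \<sigma> j" for j using strongly_inc_pos[OF \<sigma>] .
  let ?f = "\<lambda>j. ennreal (sqrt (min 1 (\<sigma> j / t) / \<psi> (\<sigma> j)))"
  have "(if \<sigma> j \<le> t then ?f j else 0)
      = ennreal (1 / sqrt t) * (if \<sigma> j \<le> t then ennreal (sqrt (\<sigma> j / \<psi> (\<sigma> j))) else 0)" for j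
    using t sp[of j] qconcave_pos[OF \<psi> sp[of j]]
    by (simp add: min_def field_simps ennreal_mult'[symmetric] real_sqrt_divide real_sqrt_mult)
  then have "zsum (\<lambda>j. if \<sigma> j \<le> t then ?f j else 0)
      = ennreal (1 / sqrt t) * zsum (\<lambda>j. if \<sigma> j \<le> t then ennreal (sqrt (\<sigma> j / \<psi> (\<sigma> j))) else 0)"
    by (simp add: zsum_cmult)
  also have "\<dots> \<le> ennreal (1 / sqrt t) * ennreal (geo_const * sqrt (t / \<psi> t))"
    by (intro mult_left_mono zsum_sqrt_ratio_below_le[OF \<psi> \<sigma> dec t]) auto
  also have "\<dots> = ennreal (geo_const / sqrt (\<psi> t))"
    using t pt geo_const_pos by (simp add: ennreal_mult'[symmetric] real_sqrt_divide)
  finally have below: "zsum (\<lambda>j. if \<sigma> j \<le> t then ?f j else 0) \<le> ennreal (geo_const / sqrt (\<psi> t))" .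
  have "zsum (\<lambda>j. if \<sigma> j \<le> t then 0 else ?f j)
      \<le> zsum (\<lambda>j. if t \<le> \<sigma> j then ennreal (1 / sqrt (\<psi> (\<sigma> j))) else 0)"
    using t by (intro zsum_mono) (simp add: min_def field_simps real_sqrt_divide)
  also have "\<dots> \<le> ennreal (geo_const / sqrt (\<psi> t))" by (rule zsum_inv_sqrt_above_le[OF \<psi> \<sigma> inc t])
  finally have above: "zsum (\<lambda>j. if \<sigma> j \<le> t then 0 else ?f j) \<le> ennreal (geo_const / sqrt (\<psi> t))" .
  have "zsum ?f \<le> ennreal (geo_const / sqrt (\<psi> t)) + ennreal (geo_const / sqrt (\<psi> t))"
    using add_mono[OF below above] zsum_split[of ?f "\<lambda>j. \<sigma> j \<le> t"] by simp
  also have "\<dots> = ennreal (2 * geo_const / sqrt (\<psi> t))"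
    using geo_const_pos pt by (simp add: ennreal_plus[symmetric] del: ennreal_plus)
  finally show ?thesis .
qed

section \<open>The K-functional of the couple (l_q, l_q(1/tt))\<close>

lemma Kfun_le:
  assumes "\<forall>i. x i = x0 i + x1 i"
  shows "Kfun N0 N1 t x \<le> N0 x0 + ennreal t * N1 x1"
  unfolding Kfun_def by (rule INF_lower2[of "(x0, x1)"]) (use assms in auto)

lemma Kfun_greatest:
  assumes "\<And>x0 x1. \<forall>i. x i = x0 i + x1 i \<Longrightarrow> c \<le> N0 x0 + ennreal t * N1 x1"
  shows "c \<le> Kfun N0 N1 t x"
  unfolding Kfun_def by (rule INF_greatest) (use assms in auto)

lemma Kfun_greatest_scaled:
  assumes E: "0 < E"
    and le: "\<And>x0 x1. \<forall>i. x i = x0 i + x1 i \<Longrightarrow> X \<le> ennreal E * (N0 x0 + ennreal t * N1 x1)"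
  shows "X \<le> ennreal E * Kfun N0 N1 t x"
proof -
  have inv: "ennreal E * ennreal (1 / E) = 1" using E by (simp add: ennreal_mult[symmetric])
  have "X * ennreal (1 / E) \<le> Kfun N0 N1 t x"
  proof (rule Kfun_greatest)
    fix x0 x1 assume "\<forall>i. x i = x0 i + x1 i"
    then have "X * ennreal (1 / E) \<le> ennreal E * (N0 x0 + ennreal t * N1 x1) * ennreal (1 / E)"
      using le by (intro mult_right_mono) auto
    also have "\<dots> = (ennreal E * ennreal (1 / E)) * (N0 x0 + ennreal t * N1 x1)"
      by (simp add: mult_ac)
    finally show "X * ennreal (1 / E) \<le> N0 x0 + ennreal t * N1 x1" using inv by simp
  qed
  then have "ennreal E * (X * ennreal (1 / E)) \<le> ennreal E * Kfun N0 N1 t x"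
    by (rule mult_left_mono) simp
  moreover have "ennreal E * (X * ennreal (1 / E)) = X"
    using inv by (metis mult.assoc mult.commute mult_1)
  ultimately show ?thesis by simp
qed

lemma Kfun_div_le_split:
  assumes "\<forall>i. x i = x0 i + x1 i" "0 < c" "0 \<le> t"
  shows "Kfun N0 N1 t x / ennreal c \<le> N0 x0 * ennreal (1 / c) + N1 x1 * ennreal (t / c)"
proof -
  have "Kfun N0 N1 t x / ennreal c \<le> (N0 x0 + ennreal t * N1 x1) * ennreal (1 / c)"
    unfolding ennreal_div_eq_mult[OF assms(2)] by (intro mult_right_mono Kfun_le[OF assms(1)]) auto
  also have "\<dots> = N0 x0 * ennreal (1 / c) + N1 x1 * (ennreal t * ennreal (1 / c))"
    by (simp add: algebra_simps)
  also have "ennreal t * ennreal (1 / c) = ennreal (t / c)"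
    using assms(2,3) by (simp add: ennreal_mult[symmetric])
  finally show ?thesis .
qed

lemma Kfun_lq_lower:
  assumes q: "1 \<le> q" and t: "0 < t" and tk: "0 < tt k"
  shows "ennreal (min 1 (t / tt k) * \<bar>y k\<bar>) \<le> Kfun (lqw q (\<lambda>_. 1)) (lqw q (\<lambda>k. 1 / tt k)) t y"
proof (rule Kfun_greatest)
  fix x0 x1 assume dec: "\<forall>i. y i = x0 i + x1 i"
  have "min 1 (t / tt k) * \<bar>y k\<bar> \<le> min 1 (t / tt k) * \<bar>x0 k\<bar> + min 1 (t / tt k) * \<bar>x1 k\<bar>"
    using dec t tk by (simp add: abs_triangle_ineq distrib_left[symmetric] mult_left_mono)
  also have "\<dots> \<le> \<bar>x0 k * 1\<bar> + t * \<bar>x1 k * (1 / tt k)\<bar>"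
  proof (rule add_mono)
    show "min 1 (t / tt k) * \<bar>x0 k\<bar> \<le> \<bar>x0 k * 1\<bar>"
      using mult_right_mono[of "min 1 (t / tt k)" 1 "\<bar>x0 k\<bar>"] by simp
    have "min 1 (t / tt k) * \<bar>x1 k\<bar> \<le> t / tt k * \<bar>x1 k\<bar>"
      by (rule mult_right_mono) auto
    then show "min 1 (t / tt k) * \<bar>x1 k\<bar> \<le> t * \<bar>x1 k * (1 / tt k)\<bar>"
      using tk by (simp add: abs_mult)
  qed
  finally have "ennreal (min 1 (t / tt k) * \<bar>y k\<bar>) \<le> ennreal \<bar>x0 k * 1\<bar> + ennreal t * ennreal \<bar>x1 k * (1 / tt k)\<bar>"
    using t by (simp add: ennreal_mult'[symmetric] ennreal_plus[symmetric] del: ennreal_plus)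
  also have "\<dots> \<le> lqw q (\<lambda>_. 1) x0 + ennreal t * lqw q (\<lambda>k. 1 / tt k) x1"
    unfolding lqw_def using q
    by (intro add_mono mult_left_mono lp_enn_upper[where b="\<lambda>i. ennreal \<bar>x0 i * 1\<bar>"]
        lp_enn_upper[where b="\<lambda>i. ennreal \<bar>x1 i * (1 / tt i)\<bar>"]) auto
  finally show "ennreal (min 1 (t / tt k) * \<bar>y k\<bar>) \<le> lqw q (\<lambda>_. 1) x0 + ennreal t * lqw q (\<lambda>k. 1 / tt k) x1" .
qed

lemma Kfun_lq_upper:
  assumes q: "1 \<le> q" and t: "0 < t" and tk: "\<And>k. 0 < tt k"
  shows "Kfun (lqw q (\<lambda>_. 1)) (lqw q (\<lambda>k. 1 / tt k)) t y \<le> zsum (\<lambda>k. ennreal (min 1 (t / tt k) * \<bar>y k\<bar>))"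
proof -
  define y0 where "y0 k = (if tt k \<le> t then y k else 0)" for k
  define y1 where "y1 k = (if tt k \<le> t then 0 else y k)" for k
  have "Kfun (lqw q (\<lambda>_. 1)) (lqw q (\<lambda>k. 1 / tt k)) t y \<le> lqw q (\<lambda>_. 1) y0 + ennreal t * lqw q (\<lambda>k. 1 / tt k) y1"
    by (rule Kfun_le) (simp add: y0_def y1_def)
  also have "\<dots> \<le> zsum (\<lambda>k. ennreal \<bar>y0 k * 1\<bar>) + ennreal t * zsum (\<lambda>k. ennreal \<bar>y1 k * (1 / tt k)\<bar>)"
    unfolding lqw_def using q by (intro add_mono mult_left_mono lp_enn_le_zsum) auto
  also have "\<dots> = zsum (\<lambda>k. ennreal \<bar>y0 k * 1\<bar> + ennreal t * ennreal \<bar>y1 k * (1 / tt k)\<bar>)"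
    by (simp add: zsum_add zsum_cmult)
  also have "\<dots> = zsum (\<lambda>k. ennreal (min 1 (t / tt k) * \<bar>y k\<bar>))"
  proof (rule arg_cong[where f=zsum], rule ext)
    fix k
    show "ennreal \<bar>y0 k * 1\<bar> + ennreal t * ennreal \<bar>y1 k * (1 / tt k)\<bar> = ennreal (min 1 (t / tt k) * \<bar>y k\<bar>)"
      using t tk[of k]
      by (cases "tt k \<le> t") (simp_all add: y0_def y1_def min_def field_simps ennreal_mult'[symmetric] abs_mult)
  qed
  finally show ?thesis .
qed

lemma abs_div_le_Kfun_good_index:
  assumes q: "1 \<le> q" and \<psi>: "qconcave \<psi>" and \<sigma>: "strongly_inc \<sigma>" and Z: "discretizing_split \<sigma> \<psi> Z"
    and tk: "0 < tt k" and j: "j = good_index \<sigma> Z (tt k)"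
  shows "ennreal (\<bar>y k\<bar> / \<psi> (tt k)) \<le> 2 * (Kfun (lqw q (\<lambda>_. 1)) (lqw q (\<lambda>k. 1 / tt k)) (\<sigma> j) y / ennreal (\<psi> (\<sigma> j)))"
proof -
  let ?m = "min 1 (\<sigma> j / tt k)"
  have pos: "0 < \<sigma> j" "0 < \<psi> (\<sigma> j)" "0 < \<psi> (tt k)"
    using strongly_inc_pos[OF \<sigma>] qconcave_pos[OF \<psi>] tk by auto
  have "\<bar>y k\<bar> / \<psi> (tt k) = 2 * \<bar>y k\<bar> * (1 / (2 * \<psi> (tt k)))" by simp
  also have "\<dots> \<le> 2 * \<bar>y k\<bar> * (?m / \<psi> (\<sigma> j))"
    using good_index_bound[OF \<psi> \<sigma> Z tk] j by (intro mult_left_mono) auto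
  also have "\<dots> = 2 * (?m * \<bar>y k\<bar>) * (1 / \<psi> (\<sigma> j))" by simp
  finally have "ennreal (\<bar>y k\<bar> / \<psi> (tt k)) \<le> ennreal (2 * (?m * \<bar>y k\<bar>) * (1 / \<psi> (\<sigma> j)))"
    by (rule ennreal_leI)
  also have "\<dots> = 2 * ennreal (?m * \<bar>y k\<bar>) * ennreal (1 / \<psi> (\<sigma> j))"
    by (subst ennreal_mult3) (use pos tk in auto)
  also have "\<dots> \<le> 2 * Kfun (lqw q (\<lambda>_. 1)) (lqw q (\<lambda>k. 1 / tt k)) (\<sigma> j) y * ennreal (1 / \<psi> (\<sigma> j))"
    using Kfun_lq_lower[where tt=tt and k=k, OF q pos(1) tk] by (intro mult_right_mono mult_left_mono) auto
  finally show ?thesis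
    using pos by (simp add: ennreal_div_eq_mult mult.assoc)
qed

text \<open>Schur-type estimate: the sum of \<theta> k ^ 2 * b k is at most R times the supremum of \<theta> k * b k,
  hence at most R times the l_P norm of (\<theta> k * b k); and (\<theta> k * b k) ^ P \<le> \<theta> k * b k ^ P as \<theta> k \<le> 1.\<close>

lemma enn_pow_zsum_sq_weight_le:
  fixes \<theta> b :: "int \<Rightarrow> real" and P R :: real
  assumes P: "1 \<le> P" and \<theta>: "\<And>k. 0 \<le> \<theta> k" "\<And>k. \<theta> k \<le> 1"
    and R: "zsum (\<lambda>k. ennreal (\<theta> k)) \<le> ennreal R" "0 \<le> R" and b: "\<And>k. 0 \<le> b k"
  shows "enn_pow P (zsum (\<lambda>k. ennreal (\<theta> k ^ 2 * b k)))
          \<le> ennreal (R powr P) * zsum (\<lambda>k. ennreal (\<theta> k) * enn_pow P (ennreal (b k)))"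
proof -
  define T where "T = enn_pow (1/P) (zsum (\<lambda>k. enn_pow P (ennreal (\<theta> k * b k))))"
  have sup: "ennreal (\<theta> k * b k) \<le> T" for k
  proof -
    have "ennreal (\<theta> k * b k) = enn_pow (1/P) (enn_pow P (ennreal (\<theta> k * b k)))"
      using P by (simp add: enn_pow_inverse)
    also have "\<dots> \<le> T" unfolding T_def using P by (intro enn_pow_mono zsum_upper) auto
    finally show ?thesis .
  qed
  have "zsum (\<lambda>k. ennreal (\<theta> k ^ 2 * b k)) \<le> zsum (\<lambda>k. ennreal (\<theta> k) * T)"
  proof (rule zsum_mono)
    fix k
    have "ennreal (\<theta> k ^ 2 * b k) = ennreal (\<theta> k) * ennreal (\<theta> k * b k)"
      using \<theta>[of k] b[of k] by (simp add: ennreal_mult'[symmetric] power2_eq_square mult.assoc)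
    then show "ennreal (\<theta> k ^ 2 * b k) \<le> ennreal (\<theta> k) * T"
      using sup[of k] by (simp add: mult_left_mono)
  qed
  also have "\<dots> \<le> ennreal R * T" using R by (simp add: zsum_cmult_right mult_right_mono)
  finally have "enn_pow P (zsum (\<lambda>k. ennreal (\<theta> k ^ 2 * b k))) \<le> enn_pow P (ennreal R * T)"
    using P by (intro enn_pow_mono) auto
  also have "\<dots> = ennreal (R powr P) * zsum (\<lambda>k. enn_pow P (ennreal (\<theta> k * b k)))"
    using P R by (simp add: enn_pow_mult enn_pow_ennreal T_def enn_pow_inverse)
  also have "\<dots> \<le> ennreal (R powr P) * zsum (\<lambda>k. ennreal (\<theta> k) * enn_pow P (ennreal (b k)))"
  proof (intro mult_left_mono zsum_mono)
    fix k
    have "\<theta> k powr P \<le> \<theta> k" using \<theta>[of k] P by (metis powr_one powr_mono')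
    then have "\<theta> k powr P * b k powr P \<le> \<theta> k * b k powr P" by (simp add: mult_right_mono)
    then show "enn_pow P (ennreal (\<theta> k * b k)) \<le> ennreal (\<theta> k) * enn_pow P (ennreal (b k))"
      using \<theta>[of k] b[of k] by (simp add: enn_pow_ennreal powr_mult ennreal_mult'[symmetric] ennreal_leI)
  qed simp
  finally show ?thesis .
qed

lemma zsum_sqrt_kernel_le:
  fixes tt r :: "int \<Rightarrow> real" and \<sigma> C :: real
  assumes tt: "strongly_inc tt" and \<sigma>: "0 < \<sigma>" and C: "0 < C"
    and inc: "\<And>k k'. k \<le> k' \<Longrightarrow> 2 ^ nat (k' - k) * r k \<le> r k'"
    and dec: "\<And>k k'. k \<le> k' \<Longrightarrow> 2 ^ nat (k' - k) * (r k' / tt k') \<le> r k / tt k"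
    and r: "\<And>k. 0 < r k"
    and le1: "\<And>k. k \<in> T \<Longrightarrow> min 1 (\<sigma> / tt k) * r k * C \<le> 1"
  shows "zsum (\<lambda>k. if k \<in> T then ennreal (sqrt (min 1 (\<sigma> / tt k) * r k * C)) else 0) \<le> ennreal (2 * geo_const)"
proof -
  have tp: "0 < tt k" for k using strongly_inc_pos[OF tt] .
  define v where "v k = min 1 (\<sigma> / tt k) * r k * C" for k
  have v_left: "v k = r k * C" if "tt k \<le> \<sigma>" for k
    using that tp[of k] by (simp add: v_def min_def field_simps)
  have v_right: "v k = \<sigma> * (r k / tt k) * C" if "\<not> tt k \<le> \<sigma>" for k
    using that tp[of k] by (simp add: v_def min_def field_simps)
  have v: "0 \<le> v k" for k using tp[of k] r[of k] \<sigma> C by (simp add: v_def)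
  obtain U where U: "\<And>k. tt k \<le> \<sigma> \<Longrightarrow> k \<le> U" using strongly_inc_bounded_above[OF tt] by blast
  obtain L where L: "\<And>k. \<sigma> \<le> tt k \<Longrightarrow> L \<le> k" using strongly_inc_bounded_below[OF tt \<sigma>] by blast
  have left: "zsum (\<lambda>k. if k \<in> {k \<in> T. tt k \<le> \<sigma>} then ennreal (sqrt (v k)) else 0) \<le> ennreal (geo_const * sqrt 1)"
  proof (rule zsum_sqrt_le_geometric_left[where U = U])
    fix k k' assume "k \<in> {k \<in> T. tt k \<le> \<sigma>}" "k' \<in> {k \<in> T. tt k \<le> \<sigma>}" "k < k'"
    then show "2 ^ nat (k' - k) * v k \<le> v k'"
      using inc[of k k'] C by (simp add: v_left mult.assoc[symmetric] mult_right_mono)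
  qed (use U v le1 in \<open>auto simp: v_def\<close>)
  have right: "zsum (\<lambda>k. if k \<in> {k \<in> T. \<not> tt k \<le> \<sigma>} then ennreal (sqrt (v k)) else 0) \<le> ennreal (geo_const * sqrt 1)"
  proof (rule zsum_sqrt_le_geometric_right[where L = L])
    fix k k' assume kk: "k \<in> {k \<in> T. \<not> tt k \<le> \<sigma>}" "k' \<in> {k \<in> T. \<not> tt k \<le> \<sigma>}" "k < k'"
    have "2 ^ nat (k' - k) * (\<sigma> * (r k' / tt k') * C) = \<sigma> * (2 ^ nat (k' - k) * (r k' / tt k')) * C"
      by (simp add: algebra_simps)
    also have "\<dots> \<le> \<sigma> * (r k / tt k) * C"
      using dec[of k k'] kk \<sigma> C by (intro mult_right_mono mult_left_mono) auto
    finally show "2 ^ nat (k' - k) * v k' \<le> v k" using kk by (simp add: v_right)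
  qed (use L v le1 in \<open>force simp: v_def\<close>)+
  have "zsum (\<lambda>k. if k \<in> T then ennreal (sqrt (v k)) else 0)
      = zsum (\<lambda>k. if k \<in> {k \<in> T. tt k \<le> \<sigma>} then ennreal (sqrt (v k)) else 0)
      + zsum (\<lambda>k. if k \<in> {k \<in> T. \<not> tt k \<le> \<sigma>} then ennreal (sqrt (v k)) else 0)"
    by (subst zsum_add[symmetric]) (auto intro!: arg_cong[where f=zsum])
  also have "\<dots> \<le> ennreal (geo_const * sqrt 1) + ennreal (geo_const * sqrt 1)"
    using left right by (rule add_mono)
  also have "\<dots> = ennreal (2 * geo_const)"
    using geo_const_pos by (simp add: ennreal_plus[symmetric] del: ennreal_plus)
  finally show ?thesis unfolding v_def .
qed

lemma doubling_transfer:
  fixes a b a' b' :: real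
  assumes "0 < a" "0 \<le> b'" "2 ^ d * (a * b) \<le> a' * b'" "a' \<le> 2 * a"
  shows "2 ^ d * b \<le> 2 * b'"
proof -
  have "a' * b' \<le> (2 * a) * b'" using assms by (intro mult_right_mono) auto
  then have "a * (2 ^ d * b) \<le> a * (2 * b')" using assms(3) by (simp add: algebra_simps)
  then show ?thesis using assms(1) by simp
qed

lemma arg_growth_of_value_growth:
  fixes u u' F F' :: real
  assumes "0 < u" "0 < u'" "0 < F" "2 ^ d * F \<le> 2 * F'" "F' / u' \<le> 2 * (F / u)"
  shows "2 ^ d * u \<le> 4 * u'"
proof -
  have "F' \<le> 2 * F * u' / u" using assms(1,2,5) by (simp add: field_simps)
  then have "2 ^ d * F \<le> 4 * F * u' / u" using assms(4) by simp
  then have "F * (2 ^ d * u) \<le> F * (4 * u')" using assms(1) by (simp add: field_simps)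
  then show ?thesis using assms(3) by simp
qed

lemma arg_decay_of_ratio_growth:
  fixes u u' F F' :: real
  assumes "0 < u" "0 < u'" "0 < F" "2 ^ d * (F / u) \<le> 2 * (F' / u')" "F' \<le> 2 * F"
  shows "2 ^ d * u' \<le> 4 * u"
proof -
  have "2 * (F' / u') \<le> 2 * (2 * F / u')" using assms by (simp add: divide_right_mono)
  then have "2 ^ d * (F / u) \<le> 4 * F / u'" using assms(4) by simp
  then have "F * (2 ^ d * u') \<le> F * (4 * u)" using assms(1,2) by (simp add: field_simps)
  then show ?thesis using assms(3) by simp
qed

lemma le_geometric_of_doubling:
  fixes x y :: real
  assumes "2 ^ d * y \<le> 4 * x" "x \<le> 1"
  shows "y \<le> 4 * (1/2) ^ d"
  using assms by (simp add: power_one_over field_simps)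

locale reiteration =
  fixes p q :: ennreal and \<phi>0 \<phi>1 \<phi> :: "real \<Rightarrow> real"
    and tt s0 s1 s :: "int \<Rightarrow> real"
  assumes p: "1 \<le> p" and q: "1 \<le> q"
    and qc0: "qconcave \<phi>0" and qc1: "qconcave \<phi>1" and qc: "qconcave \<phi>"
    and dt: "discretizing tt (fcomp \<phi> \<phi>0 \<phi>1)"
    and d0: "discretizing s0 \<phi>0" and d1: "discretizing s1 \<phi>1" and ds: "discretizing s \<phi>"
begin

abbreviation "Nq0 \<equiv> lqw q (\<lambda>_. 1)"
abbreviation "Nq1 \<equiv> lqw q (\<lambda>k. 1 / tt k)"
abbreviation "N0 \<equiv> Kspace Nq0 Nq1 s0 \<phi>0 p"
abbreviation "N1 \<equiv> Kspace Nq0 Nq1 s1 \<phi>1 p"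
abbreviation "Nouter \<equiv> Kspace N0 N1 s \<phi> p"
abbreviation "Nrho \<equiv> lqw p (\<lambda>i. 1 / fcomp \<phi> \<phi>0 \<phi>1 (tt i))"

definition ratio :: "int \<Rightarrow> real" where
  "ratio k = \<phi>1 (tt k) / \<phi>0 (tt k)"

definition rho :: "int \<Rightarrow> real" where
  "rho k = fcomp \<phi> \<phi>0 \<phi>1 (tt k)"

definition scaled :: "(int \<Rightarrow> real) \<Rightarrow> int \<Rightarrow> real" where
  "scaled x k = \<bar>x k\<bar> / rho k"

lemma tt_inc: "strongly_inc tt" and s0_inc: "strongly_inc s0"
  and s1_inc: "strongly_inc s1" and s_inc: "strongly_inc s"
  using dt d0 d1 ds by (simp_all add: discretizing_def)

lemma tt_pos: "0 < tt k" and s0_pos: "0 < s0 k" and s1_pos: "0 < s1 k" and s_pos: "0 < s k"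
  using tt_inc s0_inc s1_inc s_inc by (simp_all add: strongly_inc_pos)

lemma phi0_tt_pos: "0 < \<phi>0 (tt k)" and phi1_tt_pos: "0 < \<phi>1 (tt k)"
  and phi0_s0_pos: "0 < \<phi>0 (s0 k)" and phi1_s1_pos: "0 < \<phi>1 (s1 k)" and phi_s_pos: "0 < \<phi> (s k)"
  using qc0 qc1 qc tt_pos s0_pos s1_pos s_pos by (simp_all add: qconcave_pos)

lemma ratio_pos: "0 < ratio k"
  unfolding ratio_def using phi0_tt_pos phi1_tt_pos by simp

lemma phi_ratio_pos: "0 < \<phi> (ratio k)"
  using qconcave_pos[OF qc ratio_pos] .

lemma rho_eq0: "rho k = \<phi>0 (tt k) * \<phi> (ratio k)"
  by (simp add: rho_def fcomp_def ratio_def)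

lemma rho_eq1: "rho k = \<phi>1 (tt k) * (\<phi> (ratio k) / ratio k)"
  using phi0_tt_pos[of k] phi1_tt_pos[of k] by (simp add: rho_eq0 ratio_def field_simps)

lemma rho_pos: "0 < rho k"
  using phi0_tt_pos phi_ratio_pos by (simp add: rho_eq0)

lemma rho_inc: "k \<le> k' \<Longrightarrow> 2 ^ nat (k' - k) * rho k \<le> rho k'"
  unfolding rho_def by (rule strongly_inc_pow) (use dt in \<open>auto simp: discretizing_def\<close>)

lemma rho_dec: "k \<le> k' \<Longrightarrow> 2 ^ nat (k' - k) * (rho k' / tt k') \<le> rho k / tt k"
  unfolding rho_def
  by (rule strongly_dec_pow[where a="\<lambda>k. fcomp \<phi> \<phi>0 \<phi>1 (tt k) / tt k"]) (use dt in \<open>auto simp: discretizing_def\<close>)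

lemma scaled_nonneg: "0 \<le> scaled x k"
  unfolding scaled_def using rho_pos[of k] by simp

lemma Nrho_eq: "Nrho x = lp_enn p (\<lambda>i. ennreal (scaled x i))"
proof -
  have "\<bar>x i * (1 / fcomp \<phi> \<phi>0 \<phi>1 (tt i))\<bar> = scaled x i" for i
    using rho_pos[of i] unfolding scaled_def rho_def by (simp add: abs_mult)
  then show ?thesis unfolding lqw_def by simp
qed

subsection \<open>Upper estimate\<close>

text \<open>Restricting x to a set T of indices, the K-functional of the couple (l_q, l_q(1/tt)) at
  the points \<sigma> j becomes a positive kernel acting on scaled x.\<close>

definition kernel :: "(int \<Rightarrow> real) \<Rightarrow> (real \<Rightarrow> real) \<Rightarrow> real \<Rightarrow> int set \<Rightarrow> int \<Rightarrow> int \<Rightarrow> real" where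
  "kernel \<sigma> \<psi> C T j k = (if k \<in> T then min 1 (\<sigma> j / tt k) * rho k * (C / \<psi> (\<sigma> j)) else 0)"

context
  fixes \<sigma> :: "int \<Rightarrow> real" and \<psi> :: "real \<Rightarrow> real" and C :: real
  assumes \<sigma>: "strongly_inc \<sigma>" and \<psi>: "qconcave \<psi>" and C: "0 < C"
begin

lemma kernel_nonneg: "0 \<le> kernel \<sigma> \<psi> C T j k"
  unfolding kernel_def using strongly_inc_pos[OF \<sigma>] qconcave_pos[OF \<psi>] rho_pos tt_pos C
  by (simp add: less_imp_le)

lemma Kfun_part_le_kernel:
  "Kfun Nq0 Nq1 (\<sigma> j) (\<lambda>k. if k \<in> T then x k else 0) / ennreal (\<psi> (\<sigma> j)) * ennreal C
    \<le> zsum (\<lambda>k. ennreal (kernel \<sigma> \<psi> C T j k * scaled x k))"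
proof -
  let ?x = "\<lambda>k. if k \<in> T then x k else 0"
  have pos: "0 < \<sigma> j" "0 < \<psi> (\<sigma> j)" using strongly_inc_pos[OF \<sigma>] qconcave_pos[OF \<psi>] by auto
  have "Kfun Nq0 Nq1 (\<sigma> j) ?x / ennreal (\<psi> (\<sigma> j)) * ennreal C = Kfun Nq0 Nq1 (\<sigma> j) ?x * ennreal (C / \<psi> (\<sigma> j))"
    using pos C by (simp add: ennreal_div_eq_mult mult.assoc ennreal_mult[symmetric])
  also have "\<dots> \<le> zsum (\<lambda>k. ennreal (min 1 (\<sigma> j / tt k) * \<bar>?x k\<bar>)) * ennreal (C / \<psi> (\<sigma> j))"
    by (intro mult_right_mono Kfun_lq_upper[OF q pos(1) tt_pos]) auto
  also have "\<dots> = zsum (\<lambda>k. ennreal (kernel \<sigma> \<psi> C T j k * scaled x k))"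
    unfolding zsum_cmult_right[symmetric]
  proof (rule arg_cong[where f=zsum], rule ext)
    fix k
    have "min 1 (\<sigma> j / tt k) * \<bar>?x k\<bar> * (C / \<psi> (\<sigma> j)) = kernel \<sigma> \<psi> C T j k * scaled x k"
      using rho_pos[of k] by (simp add: kernel_def scaled_def)
    then show "ennreal (min 1 (\<sigma> j / tt k) * \<bar>?x k\<bar>) * ennreal (C / \<psi> (\<sigma> j)) = ennreal (kernel \<sigma> \<psi> C T j k * scaled x k)"
      using pos C tt_pos[of k] by (simp add: ennreal_mult[symmetric])
  qed
  finally show ?thesis .
qed

lemma kernel_row_le:
  assumes le1: "\<And>k. kernel \<sigma> \<psi> C T j k \<le> 1"
  shows "zsum (\<lambda>k. ennreal (sqrt (kernel \<sigma> \<psi> C T j k))) \<le> ennreal (2 * geo_const)"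
proof -
  have pos: "0 < \<sigma> j" "0 < C / \<psi> (\<sigma> j)" using strongly_inc_pos[OF \<sigma>] qconcave_pos[OF \<psi>] C by auto
  have "zsum (\<lambda>k. ennreal (sqrt (kernel \<sigma> \<psi> C T j k)))
      = zsum (\<lambda>k. if k \<in> T then ennreal (sqrt (min 1 (\<sigma> j / tt k) * rho k * (C / \<psi> (\<sigma> j)))) else 0)"
    by (rule arg_cong[where f=zsum]) (auto simp: kernel_def)
  also have "\<dots> \<le> ennreal (2 * geo_const)"
  proof (rule zsum_sqrt_kernel_le[OF tt_inc pos rho_inc rho_dec rho_pos])
    fix k assume "k \<in> T"
    then show "min 1 (\<sigma> j / tt k) * rho k * (C / \<psi> (\<sigma> j)) \<le> 1" using le1[of k] by (simp add: kernel_def)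
  qed
  finally show ?thesis .
qed

lemma Kspace_part_pow_le:
  assumes P: "1 \<le> P" "p = ennreal P" and le1: "\<And>j k. kernel \<sigma> \<psi> C T j k \<le> 1"
  shows "enn_pow P (Kspace Nq0 Nq1 \<sigma> \<psi> p (\<lambda>k. if k \<in> T then x k else 0) * ennreal C)
     \<le> ennreal ((2 * geo_const) powr P) *
        zsum (\<lambda>j. zsum (\<lambda>k. ennreal (sqrt (kernel \<sigma> \<psi> C T j k)) * enn_pow P (ennreal (scaled x k))))"
proof -
  let ?x = "\<lambda>k. if k \<in> T then x k else 0"
  have P0: "0 < P" using P by simp
  have "enn_pow P (Kspace Nq0 Nq1 \<sigma> \<psi> p ?x * ennreal C)
      = zsum (\<lambda>j. enn_pow P (Kfun Nq0 Nq1 (\<sigma> j) ?x / ennreal (\<psi> (\<sigma> j)) * ennreal C))"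
    using P P0 by (simp add: Kspace_def enn_pow_mult enn_pow_lp_enn zsum_cmult_right)
  also have "\<dots> \<le> zsum (\<lambda>j. enn_pow P (zsum (\<lambda>k. ennreal (sqrt (kernel \<sigma> \<psi> C T j k) ^ 2 * scaled x k))))"
    using kernel_nonneg Kfun_part_le_kernel P0 by (intro zsum_mono enn_pow_mono) simp_all
  also have "\<dots> \<le> zsum (\<lambda>j. ennreal ((2 * geo_const) powr P) *
        zsum (\<lambda>k. ennreal (sqrt (kernel \<sigma> \<psi> C T j k)) * enn_pow P (ennreal (scaled x k))))"
    using kernel_nonneg le1 kernel_row_le[OF le1] geo_const_pos scaled_nonneg
    by (intro zsum_mono enn_pow_zsum_sq_weight_le[OF P(1)]) auto
  finally show ?thesis by (simp add: zsum_cmult)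
qed

lemma Kspace_part_top_le:
  assumes pt: "p = top" and le1: "\<And>j k. kernel \<sigma> \<psi> C T j k \<le> 1"
  shows "Kspace Nq0 Nq1 \<sigma> \<psi> p (\<lambda>k. if k \<in> T then x k else 0) * ennreal C
     \<le> ennreal (2 * geo_const) * (SUP k. ennreal (scaled x k))"
proof -
  let ?x = "\<lambda>k. if k \<in> T then x k else 0"
  let ?M = "SUP k. ennreal (scaled x k)"
  have "Kfun Nq0 Nq1 (\<sigma> j) ?x / ennreal (\<psi> (\<sigma> j)) * ennreal C \<le> ennreal (2 * geo_const) * ?M" for j
  proof -
    have "ennreal (kernel \<sigma> \<psi> C T j k * scaled x k) \<le> ennreal (sqrt (kernel \<sigma> \<psi> C T j k)) * ?M" for k
    proof -
      have "kernel \<sigma> \<psi> C T j k \<le> sqrt (kernel \<sigma> \<psi> C T j k)"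
        using kernel_nonneg le1 by (intro real_le_rsqrt) (simp add: power2_eq_square mult_left_le_one_le)
      then show ?thesis using kernel_nonneg[of T j k] scaled_nonneg[of x k]
        by (simp add: ennreal_mult) (auto intro!: mult_mono ennreal_leI SUP_upper)
    qed
    then have "zsum (\<lambda>k. ennreal (kernel \<sigma> \<psi> C T j k * scaled x k))
        \<le> zsum (\<lambda>k. ennreal (sqrt (kernel \<sigma> \<psi> C T j k))) * ?M"
      by (simp add: zsum_mono zsum_cmult_right[symmetric])
    also have "\<dots> \<le> ennreal (2 * geo_const) * ?M"
      by (intro mult_right_mono kernel_row_le le1) simp
    finally show ?thesis using Kfun_part_le_kernel[of j T x] by simp
  qed
  then show ?thesis
    unfolding pt by (simp add: Kspace_def lp_enn_top SUP_mult_right_ennreal SUP_least)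
qed

end

abbreviation "kernel0 m \<equiv> kernel s0 \<phi>0 (1 / \<phi> (s m)) {k. ratio k \<le> s m}"
abbreviation "kernel1 m \<equiv> kernel s1 \<phi>1 (s m / \<phi> (s m)) {k. \<not> ratio k \<le> s m}"

lemma kernel0_le_1: "kernel0 m j k \<le> 1"
proof -
  have "min 1 (s0 j / tt k) * rho k * (1 / \<phi> (s m) / \<phi>0 (s0 j)) \<le> 1" if "ratio k \<le> s m"
  proof -
    have "min 1 (s0 j / tt k) * rho k \<le> (min 1 (s0 j / tt k) * \<phi>0 (tt k)) * \<phi> (s m)"
      unfolding rho_eq0 using s0_pos[of j] tt_pos[of k] phi0_tt_pos[of k] qconcave_mono[OF qc ratio_pos that]
      by (simp add: mult.assoc mult_left_mono)
    also have "\<dots> \<le> \<phi>0 (s0 j) * \<phi> (s m)"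
      using qconcave_min_le[OF qc0 s0_pos tt_pos, of j k] phi_s_pos[of m] by (intro mult_right_mono) auto
    finally show ?thesis using phi0_s0_pos[of j] phi_s_pos[of m] by (simp add: field_simps)
  qed
  then show ?thesis by (simp add: kernel_def)
qed

lemma kernel1_le_1: "kernel1 m j k \<le> 1"
proof -
  have "min 1 (s1 j / tt k) * rho k * (s m / \<phi> (s m) / \<phi>1 (s1 j)) \<le> 1" if "\<not> ratio k \<le> s m"
  proof -
    have "\<phi> (ratio k) / ratio k * s m \<le> \<phi> (s m)"
      using qconcave_ratio_antimono[OF qc s_pos, of m "ratio k"] that s_pos[of m] by (simp add: field_simps)
    then have "(min 1 (s1 j / tt k) * \<phi>1 (tt k)) * (\<phi> (ratio k) / ratio k * s m)
        \<le> (min 1 (s1 j / tt k) * \<phi>1 (tt k)) * \<phi> (s m)"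
      using s1_pos[of j] tt_pos[of k] phi1_tt_pos[of k] by (intro mult_left_mono) auto
    then have "min 1 (s1 j / tt k) * rho k * s m \<le> (min 1 (s1 j / tt k) * \<phi>1 (tt k)) * \<phi> (s m)"
      unfolding rho_eq1 by (simp add: ac_simps)
    also have "\<dots> \<le> \<phi>1 (s1 j) * \<phi> (s m)"
      using qconcave_min_le[OF qc1 s1_pos tt_pos, of j k] phi_s_pos[of m] by (intro mult_right_mono) auto
    finally show ?thesis using phi1_s1_pos[of j] phi_s_pos[of m] by (simp add: field_simps)
  qed
  then show ?thesis by (simp add: kernel_def)
qed

text \<open>The column sums factor into a sum over m, controlled by the discretizing sequence s
  of \<phi> at the point ratio k, and a sum over j, controlled by s0 (resp. s1) at tt k;
  their product is bounded because rho k = \<phi>0 (tt k) * \<phi> (ratio k).\<close>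

lemma kernel0_column_le: "zsum (\<lambda>m. zsum (\<lambda>j. ennreal (sqrt (kernel0 m j k)))) \<le> ennreal (2 * geo_const ^ 2)"
proof -
  let ?Z = "zsum (\<lambda>j. ennreal (sqrt (min 1 (s0 j / tt k) / \<phi>0 (s0 j))))"
  have inner: "zsum (\<lambda>j. ennreal (sqrt (kernel0 m j k)))
      = (if ratio k \<le> s m then ennreal (1 / sqrt (\<phi> (s m))) else 0) * (ennreal (sqrt (rho k)) * ?Z)" for m
  proof (cases "ratio k \<le> s m")
    case True
    have "ennreal (sqrt (kernel0 m j k))
        = (ennreal (1 / sqrt (\<phi> (s m))) * ennreal (sqrt (rho k))) * ennreal (sqrt (min 1 (s0 j / tt k) / \<phi>0 (s0 j)))" for j
    proof -
      have "sqrt (kernel0 m j k) = 1 / sqrt (\<phi> (s m)) * sqrt (rho k) * sqrt (min 1 (s0 j / tt k) / \<phi>0 (s0 j))"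
        using True by (simp add: kernel_def real_sqrt_mult real_sqrt_divide field_simps)
      then show ?thesis
        using phi_s_pos[of m] rho_pos[of k] s0_pos[of j] phi0_s0_pos[of j] tt_pos[of k]
        by (simp only:) (intro ennreal_mult3; simp)
    qed
    then show ?thesis using True by (simp add: zsum_cmult mult.assoc)
  qed (simp add: kernel_def zsum_def)
  have "zsum (\<lambda>m. zsum (\<lambda>j. ennreal (sqrt (kernel0 m j k))))
      = zsum (\<lambda>m. if ratio k \<le> s m then ennreal (1 / sqrt (\<phi> (s m))) else 0) * (ennreal (sqrt (rho k)) * ?Z)"
    by (simp add: inner zsum_cmult_right)
  also have "\<dots> \<le> ennreal (geo_const / sqrt (\<phi> (ratio k))) * (ennreal (sqrt (rho k)) * ennreal (2 * geo_const / sqrt (\<phi>0 (tt k))))"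
    using zsum_inv_sqrt_above_le[OF qc s_inc _ ratio_pos, of k] zsum_sqrt_min_ratio_le[OF qc0 d0 tt_pos] ds
    by (intro mult_mono) (auto simp: discretizing_def)
  also have "\<dots> = ennreal (2 * geo_const ^ 2 * (sqrt (rho k) / (sqrt (\<phi> (ratio k)) * sqrt (\<phi>0 (tt k)))))"
    using geo_const_pos rho_pos[of k] phi_ratio_pos[of k] phi0_tt_pos[of k]
    by (simp add: ennreal_mult[symmetric] power2_eq_square field_simps del: ennreal_mult')
  also have "sqrt (rho k) / (sqrt (\<phi> (ratio k)) * sqrt (\<phi>0 (tt k))) = 1"
    using phi_ratio_pos[of k] phi0_tt_pos[of k] by (simp add: rho_eq0 real_sqrt_mult)
  finally show ?thesis by simp
qed

lemma kernel1_column_le: "zsum (\<lambda>m. zsum (\<lambda>j. ennreal (sqrt (kernel1 m j k)))) \<le> ennreal (2 * geo_const ^ 2)"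
proof -
  let ?Z = "zsum (\<lambda>j. ennreal (sqrt (min 1 (s1 j / tt k) / \<phi>1 (s1 j))))"
  have inner: "zsum (\<lambda>j. ennreal (sqrt (kernel1 m j k)))
      = (if \<not> ratio k \<le> s m then ennreal (sqrt (s m / \<phi> (s m))) else 0) * (ennreal (sqrt (rho k)) * ?Z)" for m
  proof (cases "ratio k \<le> s m")
    case False
    have "ennreal (sqrt (kernel1 m j k))
        = (ennreal (sqrt (s m / \<phi> (s m))) * ennreal (sqrt (rho k))) * ennreal (sqrt (min 1 (s1 j / tt k) / \<phi>1 (s1 j)))" for j
    proof -
      have "sqrt (kernel1 m j k) = sqrt (s m / \<phi> (s m)) * sqrt (rho k) * sqrt (min 1 (s1 j / tt k) / \<phi>1 (s1 j))"
        using False by (simp add: kernel_def real_sqrt_mult real_sqrt_divide field_simps)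
      then show ?thesis
        using phi_s_pos[of m] s_pos[of m] rho_pos[of k] s1_pos[of j] phi1_s1_pos[of j] tt_pos[of k]
        by (simp only:) (intro ennreal_mult3; simp)
    qed
    then show ?thesis using False by (simp add: zsum_cmult mult.assoc)
  qed (simp add: kernel_def zsum_def)
  have "zsum (\<lambda>m. zsum (\<lambda>j. ennreal (sqrt (kernel1 m j k))))
      = zsum (\<lambda>m. if \<not> ratio k \<le> s m then ennreal (sqrt (s m / \<phi> (s m))) else 0) * (ennreal (sqrt (rho k)) * ?Z)"
    by (simp add: inner zsum_cmult_right)
  also have "\<dots> \<le> zsum (\<lambda>m. if s m \<le> ratio k then ennreal (sqrt (s m / \<phi> (s m))) else 0) * (ennreal (sqrt (rho k)) * ?Z)"
    by (intro mult_right_mono zsum_mono) auto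
  also have "\<dots> \<le> ennreal (geo_const * sqrt (ratio k / \<phi> (ratio k))) * (ennreal (sqrt (rho k)) * ennreal (2 * geo_const / sqrt (\<phi>1 (tt k))))"
    using zsum_sqrt_ratio_below_le[OF qc s_inc _ ratio_pos, of k] zsum_sqrt_min_ratio_le[OF qc1 d1 tt_pos] ds
    by (intro mult_mono) (auto simp: discretizing_def)
  also have "\<dots> = ennreal (2 * geo_const ^ 2 * (sqrt (ratio k / \<phi> (ratio k)) * sqrt (rho k) / sqrt (\<phi>1 (tt k))))"
    using geo_const_pos rho_pos[of k] phi_ratio_pos[of k] phi1_tt_pos[of k] ratio_pos[of k]
    by (simp add: ennreal_mult[symmetric] power2_eq_square field_simps del: ennreal_mult')
  also have "sqrt (ratio k / \<phi> (ratio k)) * sqrt (rho k) / sqrt (\<phi>1 (tt k)) = 1"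
    using phi_ratio_pos[of k] phi1_tt_pos[of k] ratio_pos[of k]
    by (simp add: rho_eq1 real_sqrt_mult real_sqrt_divide field_simps)
  finally show ?thesis by simp
qed

lemma Kfun_outer_le_parts:
  "Kfun N0 N1 (s m) x / ennreal (\<phi> (s m))
    \<le> N0 (\<lambda>k. if k \<in> {k. ratio k \<le> s m} then x k else 0) * ennreal (1 / \<phi> (s m))
      + N1 (\<lambda>k. if k \<in> {k. \<not> ratio k \<le> s m} then x k else 0) * ennreal (s m / \<phi> (s m))"
  by (rule Kfun_div_le_split) (use phi_s_pos s_pos less_imp_le in auto)

lemma Kfun_outer_pow_le:
  assumes P: "1 \<le> P" "p = ennreal P"
  shows "enn_pow P (Kfun N0 N1 (s m) x / ennreal (\<phi> (s m)))
    \<le> ennreal (2 powr P) * ennreal ((2 * geo_const) powr P) *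
      (zsum (\<lambda>j. zsum (\<lambda>k. ennreal (sqrt (kernel0 m j k)) * enn_pow P (ennreal (scaled x k))))
     + zsum (\<lambda>j. zsum (\<lambda>k. ennreal (sqrt (kernel1 m j k)) * enn_pow P (ennreal (scaled x k)))))"
proof -
  have P0: "0 < P" using P by simp
  have C: "0 < 1 / \<phi> (s m)" "0 < s m / \<phi> (s m)" using phi_s_pos s_pos by auto
  have "enn_pow P (Kfun N0 N1 (s m) x / ennreal (\<phi> (s m)))
      \<le> ennreal (2 powr P) *
        (enn_pow P (N0 (\<lambda>k. if k \<in> {k. ratio k \<le> s m} then x k else 0) * ennreal (1 / \<phi> (s m)))
       + enn_pow P (N1 (\<lambda>k. if k \<in> {k. \<not> ratio k \<le> s m} then x k else 0) * ennreal (s m / \<phi> (s m))))"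
    using P0 Kfun_outer_le_parts[of m x]
    by (intro order_trans[OF enn_pow_mono enn_pow_add_le]) auto
  also have "\<dots> \<le> ennreal (2 powr P) *
        (ennreal ((2 * geo_const) powr P) * zsum (\<lambda>j. zsum (\<lambda>k. ennreal (sqrt (kernel0 m j k)) * enn_pow P (ennreal (scaled x k))))
       + ennreal ((2 * geo_const) powr P) * zsum (\<lambda>j. zsum (\<lambda>k. ennreal (sqrt (kernel1 m j k)) * enn_pow P (ennreal (scaled x k)))))"
    using Kspace_part_pow_le[OF s0_inc qc0 C(1) P kernel0_le_1]
      Kspace_part_pow_le[OF s1_inc qc1 C(2) P kernel1_le_1]
    by (intro mult_left_mono add_mono) auto
  finally show ?thesis by (simp add: distrib_left mult_ac)
qed

lemma Nouter_le_finite: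
  assumes P: "1 \<le> P" "p = ennreal P"
  shows "Nouter x \<le> ennreal ((2 powr P * (2 * geo_const) powr P * (4 * geo_const ^ 2)) powr (1/P)) * Nrho x"
proof -
  let ?c = "ennreal (2 powr P) * ennreal ((2 * geo_const) powr P)"
  let ?E = "ennreal (2 * geo_const ^ 2)"
  let ?pw = "\<lambda>k. enn_pow P (ennreal (scaled x k))"
  let ?S0 = "\<lambda>m. zsum (\<lambda>j. zsum (\<lambda>k. ennreal (sqrt (kernel0 m j k)) * ?pw k))"
  let ?S1 = "\<lambda>m. zsum (\<lambda>j. zsum (\<lambda>k. ennreal (sqrt (kernel1 m j k)) * ?pw k))"
  have "zsum (\<lambda>m. enn_pow P (Kfun N0 N1 (s m) x / ennreal (\<phi> (s m)))) \<le> zsum (\<lambda>m. ?c * (?S0 m + ?S1 m))"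
    using Kfun_outer_pow_le[OF P] by (rule zsum_mono)
  also have "\<dots> = ?c * (zsum ?S0 + zsum ?S1)"
    by (simp only: zsum_cmult zsum_add)
  also have "\<dots> \<le> ?c * (zsum ?pw * ?E + zsum ?pw * ?E)"
  proof -
    have "zsum ?S0 \<le> zsum ?pw * ?E" "zsum ?S1 \<le> zsum ?pw * ?E"
      unfolding zsum_swap3 zsum_cmult_right[symmetric]
      by (intro zsum_mono mult_left_mono kernel0_column_le kernel1_column_le; simp)+
    then show ?thesis by (intro mult_left_mono add_mono) auto
  qed
  also have "\<dots> = (?c * (?E + ?E)) * zsum ?pw"
    by (simp only: distrib_left distrib_right mult_ac)
  also have "?c * (?E + ?E) = ennreal (2 powr P * (2 * geo_const) powr P * (4 * geo_const ^ 2))"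
    using geo_const_pos by (simp add: ennreal_mult[symmetric] ennreal_plus[symmetric] del: ennreal_plus)
  finally show ?thesis
    unfolding Nrho_eq unfolding Kspace_def P(2) using geo_const_pos
    by (intro lp_enn_le_scaled[OF P(1)]) auto
qed

lemma Nouter_le_top:
  assumes pt: "p = top"
  shows "Nouter x \<le> ennreal (4 * geo_const) * Nrho x"
proof -
  have C: "0 < 1 / \<phi> (s m)" "0 < s m / \<phi> (s m)" for m using phi_s_pos s_pos by auto
  let ?M = "SUP k. ennreal (scaled x k)"
  have "Kfun N0 N1 (s m) x / ennreal (\<phi> (s m)) \<le> ennreal (4 * geo_const) * ?M" for m
  proof -
    have "Kfun N0 N1 (s m) x / ennreal (\<phi> (s m)) \<le> ennreal (2 * geo_const) * ?M + ennreal (2 * geo_const) * ?M"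
      using Kfun_outer_le_parts[of m x] add_mono[OF Kspace_part_top_le[OF s0_inc qc0 C(1) pt kernel0_le_1]
        Kspace_part_top_le[OF s1_inc qc1 C(2) pt kernel1_le_1]] by (rule order_trans)
    also have "\<dots> = ennreal (4 * geo_const) * ?M"
      using geo_const_pos by (simp add: distrib_right[symmetric] ennreal_plus[symmetric] del: ennreal_plus)
    finally show ?thesis .
  qed
  then show ?thesis
    using Nrho_eq[of x] pt by (simp add: Kspace_def lp_enn_top SUP_least)
qed

subsection \<open>Lower estimate\<close>

definition Z0 :: "int set" where "Z0 = (SOME Z. discretizing_split s0 \<phi>0 Z)"
definition Z1 :: "int set" where "Z1 = (SOME Z. discretizing_split s1 \<phi>1 Z)"
definition Zs :: "int set" where "Zs = (SOME Z. discretizing_split s \<phi> Z)"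

lemma Z0: "discretizing_split s0 \<phi>0 Z0"
  unfolding Z0_def using discretizing_split_exists[OF d0] by (rule someI_ex)

lemma Z1: "discretizing_split s1 \<phi>1 Z1"
  unfolding Z1_def using discretizing_split_exists[OF d1] by (rule someI_ex)

lemma Zs: "discretizing_split s \<phi> Zs"
  unfolding Zs_def using discretizing_split_exists[OF ds] by (rule someI_ex)

definition idx0 :: "int \<Rightarrow> int" where "idx0 k = good_index s0 Z0 (tt k)"
definition idx1 :: "int \<Rightarrow> int" where "idx1 k = good_index s1 Z1 (tt k)"
definition idx :: "int \<Rightarrow> int" where "idx k = good_index s Zs (ratio k)"

definition w0 :: "int \<Rightarrow> int \<Rightarrow> real" where "w0 m k = min 1 (s m / ratio k)"
definition w1 :: "int \<Rightarrow> int \<Rightarrow> real" where "w1 m k = min 1 (ratio k / s m)"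

lemma w0_nonneg: "0 \<le> w0 m k" and w1_nonneg: "0 \<le> w1 m k"
  unfolding w0_def w1_def using s_pos[of m] ratio_pos[of k] by simp_all

lemma w0_le_1: "w0 m k \<le> 1" and w1_le_1: "w1 m k \<le> 1"
  unfolding w0_def w1_def by simp_all

lemma w0_div_eq: "w0 m k / \<phi>0 (tt k) = s m * w1 m k / \<phi>1 (tt k)"
proof -
  have "\<phi>1 (tt k) = ratio k * \<phi>0 (tt k)" using phi0_tt_pos[of k] by (simp add: ratio_def)
  then show ?thesis
    using ratio_pos[of k] s_pos[of m] phi0_tt_pos[of k]
    by (cases "ratio k \<le> s m") (simp_all add: w0_def w1_def min_def field_simps)
qed

lemma scaled_le_abs_parts:
  assumes "\<forall>i. x i = x0 i + x1 i"
  shows "scaled x k \<le> (2 / \<phi> (s (idx k))) *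
    (w0 (idx k) k * (\<bar>x0 k\<bar> / \<phi>0 (tt k)) + s (idx k) * w1 (idx k) k * (\<bar>x1 k\<bar> / \<phi>1 (tt k)))"
proof -
  let ?m = "idx k"
  have "1 / (2 * \<phi> (ratio k)) \<le> w0 ?m k / \<phi> (s ?m)"
    using good_index_bound[OF qc s_inc Zs ratio_pos, of k] unfolding idx_def w0_def .
  then have "(2 / \<phi>0 (tt k)) * (1 / (2 * \<phi> (ratio k))) \<le> (2 / \<phi>0 (tt k)) * (w0 ?m k / \<phi> (s ?m))"
    using phi0_tt_pos[of k] by (intro mult_left_mono) auto
  then have inv: "1 / rho k \<le> 2 * w0 ?m k / (\<phi>0 (tt k) * \<phi> (s ?m))"
    using phi0_tt_pos[of k] phi_s_pos[of ?m] phi_ratio_pos[of k] by (simp add: rho_eq0 field_simps)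
  have "scaled x k = \<bar>x k\<bar> * (1 / rho k)" by (simp add: scaled_def)
  also have "\<dots> \<le> (\<bar>x0 k\<bar> + \<bar>x1 k\<bar>) * (2 * w0 ?m k / (\<phi>0 (tt k) * \<phi> (s ?m)))"
    using assms inv rho_pos[of k] by (intro mult_mono) (auto simp: abs_triangle_ineq)
  also have "\<dots> = (2 / \<phi> (s ?m)) * (w0 ?m k * (\<bar>x0 k\<bar> / \<phi>0 (tt k)) + (w0 ?m k / \<phi>0 (tt k)) * \<bar>x1 k\<bar>)"
    using phi0_tt_pos[of k] phi_s_pos[of ?m] by (simp add: field_simps)
  also have "w0 ?m k / \<phi>0 (tt k) = s ?m * w1 ?m k / \<phi>1 (tt k)" by (rule w0_div_eq)
  finally show ?thesis by simp
qed

lemma scaled_le_Kfun_parts: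
  assumes dec: "\<forall>i. x i = x0 i + x1 i"
  shows "ennreal (scaled x k) \<le> ennreal (4 / \<phi> (s (idx k))) *
     (ennreal (w0 (idx k) k) * (Kfun Nq0 Nq1 (s0 (idx0 k)) x0 / ennreal (\<phi>0 (s0 (idx0 k))))
      + ennreal (s (idx k) * w1 (idx k) k) * (Kfun Nq0 Nq1 (s1 (idx1 k)) x1 / ennreal (\<phi>1 (s1 (idx1 k)))))"
proof -
  let ?m = "idx k"
  let ?A = "\<bar>x0 k\<bar> / \<phi>0 (tt k)" and ?B = "\<bar>x1 k\<bar> / \<phi>1 (tt k)"
  let ?g = "Kfun Nq0 Nq1 (s0 (idx0 k)) x0 / ennreal (\<phi>0 (s0 (idx0 k)))"
  let ?h = "Kfun Nq0 Nq1 (s1 (idx1 k)) x1 / ennreal (\<phi>1 (s1 (idx1 k)))"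
  have nonneg: "0 \<le> ?A" "0 \<le> ?B" "0 \<le> s ?m * w1 ?m k" "0 \<le> 2 / \<phi> (s ?m)"
    using phi0_tt_pos[of k] phi1_tt_pos[of k] s_pos[of ?m] w1_nonneg[of ?m k] phi_s_pos[of ?m] by auto
  have "ennreal (scaled x k) \<le> ennreal ((2 / \<phi> (s ?m)) * (w0 ?m k * ?A + s ?m * w1 ?m k * ?B))"
    using scaled_le_abs_parts[OF dec] by (rule ennreal_leI)
  also have "\<dots> = ennreal (2 / \<phi> (s ?m)) * (ennreal (w0 ?m k) * ennreal ?A + ennreal (s ?m * w1 ?m k) * ennreal ?B)"
    using nonneg w0_nonneg[of ?m k] by (rule ennreal_mult_add)
  also have "\<dots> \<le> ennreal (2 / \<phi> (s ?m)) * (ennreal (w0 ?m k) * (2 * ?g) + ennreal (s ?m * w1 ?m k) * (2 * ?h))"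
    using abs_div_le_Kfun_good_index[where tt = tt, OF q qc0 s0_inc Z0 tt_pos idx0_def, of x0]
      abs_div_le_Kfun_good_index[where tt = tt, OF q qc1 s1_inc Z1 tt_pos idx1_def, of x1]
    by (intro mult_left_mono add_mono) auto
  also have "\<dots> = (ennreal (2 / \<phi> (s ?m)) * 2) * (ennreal (w0 ?m k) * ?g + ennreal (s ?m * w1 ?m k) * ?h)"
    by (simp add: algebra_simps)
  also have "ennreal (2 / \<phi> (s ?m)) * 2 = ennreal (4 / \<phi> (s ?m))"
    using nonneg(4) ennreal_mult[of "2 / \<phi> (s ?m)" 2] by simp
  finally show ?thesis .
qed

lemma Nrho_le_top:
  assumes pt: "p = top"
  shows "Nrho x \<le> ennreal 4 * Nouter x"
proof -
  have "ennreal (scaled x k) \<le> ennreal 4 * Nouter x" for k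
  proof -
    let ?m = "idx k"
    have "ennreal (scaled x k) \<le> ennreal (4 / \<phi> (s ?m)) * Kfun N0 N1 (s ?m) x"
    proof (rule Kfun_greatest_scaled)
      show "0 < 4 / \<phi> (s ?m)" using phi_s_pos by simp
    next
      fix x0 x1 assume dec: "\<forall>i. x i = x0 i + x1 i"
      have "Kfun Nq0 Nq1 (s0 (idx0 k)) x0 / ennreal (\<phi>0 (s0 (idx0 k))) \<le> N0 x0"
        "Kfun Nq0 Nq1 (s1 (idx1 k)) x1 / ennreal (\<phi>1 (s1 (idx1 k))) \<le> N1 x1"
        unfolding pt Kspace_def by (rule lp_enn_upper, simp)+
      moreover have "ennreal (w0 ?m k) \<le> 1" "ennreal (s ?m * w1 ?m k) \<le> ennreal (s ?m)"
        using w0_le_1[of ?m k] w1_le_1[of ?m k] s_pos[of ?m] w1_nonneg[of ?m k]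
        by (auto simp: ennreal_le_1 intro!: ennreal_leI mult_left_le)
      ultimately have "ennreal (w0 ?m k) * (Kfun Nq0 Nq1 (s0 (idx0 k)) x0 / ennreal (\<phi>0 (s0 (idx0 k))))
          + ennreal (s ?m * w1 ?m k) * (Kfun Nq0 Nq1 (s1 (idx1 k)) x1 / ennreal (\<phi>1 (s1 (idx1 k))))
          \<le> 1 * N0 x0 + ennreal (s ?m) * N1 x1"
        by (intro add_mono mult_mono) auto
      then show "ennreal (scaled x k) \<le> ennreal (4 / \<phi> (s ?m)) * (N0 x0 + ennreal (s ?m) * N1 x1)"
        using scaled_le_Kfun_parts[OF dec, of k] by (auto elim!: order_trans intro: mult_left_mono)
    qed
    also have "\<dots> = ennreal 4 * (Kfun N0 N1 (s ?m) x / ennreal (\<phi> (s ?m)))"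
      using phi_s_pos[of ?m] ennreal_mult[of 4 "1 / \<phi> (s ?m)"] by (simp add: ennreal_div_eq_mult mult_ac)
    also have "Kfun N0 N1 (s ?m) x / ennreal (\<phi> (s ?m)) \<le> Nouter x"
      unfolding pt Kspace_def by (rule lp_enn_upper) simp
    finally show ?thesis by (simp add: mult_left_mono)
  qed
  then show ?thesis using Nrho_eq[of x] pt by (simp add: lp_enn_top SUP_least)
qed

definition cell0 :: "int \<Rightarrow> int" where "cell0 k = cell s0 (tt k)"
definition cell1 :: "int \<Rightarrow> int" where "cell1 k = cell s1 (tt k)"
definition cellr :: "int \<Rightarrow> int" where "cellr k = cell s (ratio k)"

lemma idx0_eq: "idx0 k = cell0 k + (if cell0 k \<in> Z0 then 1 else 0)"
  and idx1_eq: "idx1 k = cell1 k + (if cell1 k \<in> Z1 then 1 else 0)"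
  and idx_eq: "idx k = cellr k + (if cellr k \<in> Zs then 1 else 0)"
  by (simp_all add: idx0_def idx1_def idx_def good_index_def cell0_def cell1_def cellr_def)

lemma cell0_bounded: "\<exists>L U. \<forall>k. cell0 k = a \<longrightarrow> L \<le> k \<and> k \<le> U"
  and cell1_bounded: "\<exists>L U. \<forall>k. cell1 k = a \<longrightarrow> L \<le> k \<and> k \<le> U"
proof -
  obtain L0 L1 where "\<And>k. s0 a \<le> tt k \<Longrightarrow> L0 \<le> k" "\<And>k. s1 a \<le> tt k \<Longrightarrow> L1 \<le> k"
    using strongly_inc_bounded_below[OF tt_inc s0_pos] strongly_inc_bounded_below[OF tt_inc s1_pos] by metis
  moreover obtain U0 U1 where "\<And>k. tt k \<le> s0 (a + 1) \<Longrightarrow> k \<le> U0" "\<And>k. tt k \<le> s1 (a + 1) \<Longrightarrow> k \<le> U1"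
    using strongly_inc_bounded_above[OF tt_inc] by metis
  ultimately show "\<exists>L U. \<forall>k. cell0 k = a \<longrightarrow> L \<le> k \<and> k \<le> U" "\<exists>L U. \<forall>k. cell1 k = a \<longrightarrow> L \<le> k \<and> k \<le> U"
    using cell_bounds[OF s0_inc tt_pos] cell_bounds[OF s1_inc tt_pos]
    unfolding cell0_def cell1_def by (metis less_le)+
qed

lemma w_in_Zs:
  assumes "cellr k \<in> Zs"
  shows "w0 (idx k) k = 1" "w1 (idx k) k = ratio k / s (idx k)"
proof -
  have "ratio k < s (idx k)"
    using cell_bounds[OF s_inc ratio_pos, of k] assms by (simp add: idx_eq cellr_def)
  then show "w0 (idx k) k = 1" "w1 (idx k) k = ratio k / s (idx k)"
    using ratio_pos[of k] s_pos[of "idx k"] by (simp_all add: w0_def w1_def min_def field_simps)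
qed

lemma w_not_in_Zs:
  assumes "cellr k \<notin> Zs"
  shows "w0 (idx k) k = s (idx k) / ratio k" "w1 (idx k) k = 1"
proof -
  have "s (idx k) \<le> ratio k"
    using cell_bounds[OF s_inc ratio_pos, of k] assms by (simp add: idx_eq cellr_def)
  then show "w0 (idx k) k = s (idx k) / ratio k" "w1 (idx k) k = 1"
    using ratio_pos[of k] s_pos[of "idx k"] by (simp_all add: w0_def w1_def min_def field_simps)
qed

lemma rho0_doubling: "k \<le> k' \<Longrightarrow> 2 ^ nat (k' - k) * (\<phi>0 (tt k) * \<phi> (ratio k)) \<le> \<phi>0 (tt k') * \<phi> (ratio k')"
  using rho_inc by (simp add: rho_eq0)

lemma rho0_halving:
  "k \<le> k' \<Longrightarrow> 2 ^ nat (k' - k) * (\<phi>0 (tt k') / tt k' * \<phi> (ratio k')) \<le> \<phi>0 (tt k) / tt k * \<phi> (ratio k)"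
  using rho_dec by (simp add: rho_eq0)

lemma rho1_doubling:
  "k \<le> k' \<Longrightarrow> 2 ^ nat (k' - k) * (\<phi>1 (tt k) * (\<phi> (ratio k) / ratio k)) \<le> \<phi>1 (tt k') * (\<phi> (ratio k') / ratio k')"
  using rho_inc by (simp add: rho_eq1)

lemma rho1_halving:
  "k \<le> k' \<Longrightarrow> 2 ^ nat (k' - k) * (\<phi>1 (tt k') / tt k' * (\<phi> (ratio k') / ratio k'))
     \<le> \<phi>1 (tt k) / tt k * (\<phi> (ratio k) / ratio k)"
  using rho_dec by (simp add: rho_eq1 mult.commute)

lemmas flat0_in = cell_flat_in_split[OF qc0 s0_inc Z0 tt_pos tt_pos, folded cell0_def]
lemmas flat0_out = cell_flat_not_in_split[OF qc0 s0_inc Z0 tt_pos tt_pos, folded cell0_def]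
lemmas flat1_in = cell_flat_in_split[OF qc1 s1_inc Z1 tt_pos tt_pos, folded cell1_def]
lemmas flat1_out = cell_flat_not_in_split[OF qc1 s1_inc Z1 tt_pos tt_pos, folded cell1_def]
lemmas flatr_in = cell_flat_in_split[OF qc s_inc Zs ratio_pos ratio_pos, folded cellr_def]
lemmas flatr_out = cell_flat_not_in_split[OF qc s_inc Zs ratio_pos ratio_pos, folded cellr_def]

lemma quotients_pos: "0 < \<phi>0 (tt k) / tt k" "0 < \<phi>1 (tt k) / tt k" "0 < \<phi> (ratio k) / ratio k"
  using phi0_tt_pos[of k] phi1_tt_pos[of k] tt_pos[of k] phi_ratio_pos[of k] ratio_pos[of k] by auto

text \<open>The indices k with given cells of tt k (for s0, resp. s1) and of ratio k (for s) form a class on which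
  both factors of rho k are almost constant, or almost linear, in their arguments. Since rho grows
  geometrically along the tt k, either such a class has at most three elements, or the weight
  w0 (resp. w1) decays geometrically along it.\<close>

lemma class0_short:
  assumes "b \<in> Zs" "cell0 k = a" "cell0 k' = a" "cellr k = b" "cellr k' = b" "k \<le> k'"
  shows "(2::real) ^ nat (k' - k) \<le> 4"
proof (cases "a \<in> Z0")
  case True
  have "2 ^ nat (k' - k) * \<phi> (ratio k) \<le> 2 * \<phi> (ratio k')"
    by (rule doubling_transfer[OF phi0_tt_pos _ rho0_doubling[OF assms(6)] flat0_in[OF assms(2,3) True]])
       (rule less_imp_le[OF phi_ratio_pos])
  also have "\<dots> \<le> 4 * \<phi> (ratio k)" using flatr_in[OF assms(4,5,1)] by simp
  finally show ?thesis using phi_ratio_pos[of k] by simp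
next
  case False
  have "2 ^ nat (k' - k) * \<phi> (ratio k') \<le> 2 * \<phi> (ratio k)"
    by (rule doubling_transfer[OF quotients_pos(1) _ rho0_halving[OF assms(6)] flat0_out[OF assms(2,3) False]])
       (rule less_imp_le[OF phi_ratio_pos])
  also have "\<dots> \<le> 4 * \<phi> (ratio k')" using flatr_in[OF assms(5,4,1)] by simp
  finally show ?thesis using phi_ratio_pos[of k'] by simp
qed

lemma class0_long:
  assumes "b \<notin> Zs" "cell0 k = a" "cell0 k' = a" "cellr k = b" "cellr k' = b" "idx k = m" "idx k' = m" "k \<le> k'"
  shows "if a \<in> Z0 then w0 m k' \<le> 4 * (1/2) ^ nat (k' - k) else w0 m k \<le> 4 * (1/2) ^ nat (k' - k)"
proof -
  have w: "w0 m k = s m / ratio k" "w0 m k' = s m / ratio k'"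
    using w_not_in_Zs[of k] w_not_in_Zs[of k'] assms by auto
  show ?thesis
  proof (cases "a \<in> Z0")
    case True
    have "2 ^ nat (k' - k) * \<phi> (ratio k) \<le> 2 * \<phi> (ratio k')"
      by (rule doubling_transfer[OF phi0_tt_pos _ rho0_doubling[OF assms(8)] flat0_in[OF assms(2,3) True]])
         (rule less_imp_le[OF phi_ratio_pos])
    then have "2 ^ nat (k' - k) * ratio k \<le> 4 * ratio k'"
      by (rule arg_growth_of_value_growth[OF ratio_pos ratio_pos phi_ratio_pos _ flatr_out[OF assms(5,4,1)]])
    then have "2 ^ nat (k' - k) * w0 m k' \<le> 4 * w0 m k"
      using s_pos[of m] ratio_pos[of k] ratio_pos[of k'] unfolding w by (simp add: field_simps)
    then show ?thesis using True w0_le_1[of m k] by (simp add: le_geometric_of_doubling)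
  next
    case False
    have "2 ^ nat (k' - k) * \<phi> (ratio k') \<le> 2 * \<phi> (ratio k)"
      by (rule doubling_transfer[OF quotients_pos(1) _ rho0_halving[OF assms(8)] flat0_out[OF assms(2,3) False]])
         (rule less_imp_le[OF phi_ratio_pos])
    then have "2 ^ nat (k' - k) * ratio k' \<le> 4 * ratio k"
      by (rule arg_growth_of_value_growth[OF ratio_pos ratio_pos phi_ratio_pos _ flatr_out[OF assms(4,5,1)]])
    then have "2 ^ nat (k' - k) * w0 m k \<le> 4 * w0 m k'"
      using s_pos[of m] ratio_pos[of k] ratio_pos[of k'] unfolding w by (simp add: field_simps)
    then show ?thesis using False w0_le_1[of m k'] by (simp add: le_geometric_of_doubling)
  qed
qed

lemma class1_short:
  assumes "b \<notin> Zs" "cell1 k = a" "cell1 k' = a" "cellr k = b" "cellr k' = b" "k \<le> k'"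
  shows "(2::real) ^ nat (k' - k) \<le> 4"
proof (cases "a \<in> Z1")
  case True
  have "2 ^ nat (k' - k) * (\<phi> (ratio k) / ratio k) \<le> 2 * (\<phi> (ratio k') / ratio k')"
    by (rule doubling_transfer[OF phi1_tt_pos _ rho1_doubling[OF assms(6)] flat1_in[OF assms(2,3) True]])
       (rule less_imp_le[OF quotients_pos(3)])
  also have "\<dots> \<le> 4 * (\<phi> (ratio k) / ratio k)" using flatr_out[OF assms(5,4,1)] by simp
  finally show ?thesis using quotients_pos(3)[of k] by (rule mult_right_le_imp_le)
next
  case False
  have "2 ^ nat (k' - k) * (\<phi> (ratio k') / ratio k') \<le> 2 * (\<phi> (ratio k) / ratio k)"
    by (rule doubling_transfer[OF quotients_pos(2) _ rho1_halving[OF assms(6)] flat1_out[OF assms(2,3) False]])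
       (rule less_imp_le[OF quotients_pos(3)])
  also have "\<dots> \<le> 4 * (\<phi> (ratio k') / ratio k')" using flatr_out[OF assms(4,5,1)] by simp
  finally show ?thesis using quotients_pos(3)[of k'] by (rule mult_right_le_imp_le)
qed

lemma class1_long:
  assumes "b \<in> Zs" "cell1 k = a" "cell1 k' = a" "cellr k = b" "cellr k' = b" "idx k = m" "idx k' = m" "k \<le> k'"
  shows "if a \<in> Z1 then w1 m k' \<le> 4 * (1/2) ^ nat (k' - k) else w1 m k \<le> 4 * (1/2) ^ nat (k' - k)"
proof -
  have w: "w1 m k = ratio k / s m" "w1 m k' = ratio k' / s m"
    using w_in_Zs[of k] w_in_Zs[of k'] assms by auto
  show ?thesis
  proof (cases "a \<in> Z1")
    case True
    have "2 ^ nat (k' - k) * (\<phi> (ratio k) / ratio k) \<le> 2 * (\<phi> (ratio k') / ratio k')"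
      by (rule doubling_transfer[OF phi1_tt_pos _ rho1_doubling[OF assms(8)] flat1_in[OF assms(2,3) True]])
         (rule less_imp_le[OF quotients_pos(3)])
    then have "2 ^ nat (k' - k) * ratio k' \<le> 4 * ratio k"
      by (rule arg_decay_of_ratio_growth[OF ratio_pos ratio_pos phi_ratio_pos _ flatr_in[OF assms(4,5,1)]])
    then have "2 ^ nat (k' - k) * w1 m k' \<le> 4 * w1 m k"
      using s_pos[of m] unfolding w by (simp add: field_simps)
    then show ?thesis using True w1_le_1[of m k] by (simp add: le_geometric_of_doubling)
  next
    case False
    have "2 ^ nat (k' - k) * (\<phi> (ratio k') / ratio k') \<le> 2 * (\<phi> (ratio k) / ratio k)"
      by (rule doubling_transfer[OF quotients_pos(2) _ rho1_halving[OF assms(8)] flat1_out[OF assms(2,3) False]])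
         (rule less_imp_le[OF quotients_pos(3)])
    then have "2 ^ nat (k' - k) * ratio k \<le> 4 * ratio k'"
      by (rule arg_decay_of_ratio_growth[OF ratio_pos ratio_pos phi_ratio_pos _ flatr_in[OF assms(5,4,1)]])
    then have "2 ^ nat (k' - k) * w1 m k \<le> 4 * w1 m k'"
      using s_pos[of m] unfolding w by (simp add: field_simps)
    then show ?thesis using False w1_le_1[of m k'] by (simp add: le_geometric_of_doubling)
  qed
qed

lemma class0_sum_le: "zsum (\<lambda>k. if cell0 k = a \<and> cellr k = b \<and> idx k = m then ennreal (w0 m k) else 0) \<le> 8"
proof -
  let ?G = "{k. cell0 k = a \<and> cellr k = b \<and> idx k = m}"
  obtain L U where LU: "\<forall>k. cell0 k = a \<longrightarrow> L \<le> k \<and> k \<le> U" using cell0_bounded by blast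
  consider "b \<in> Zs" | "b \<notin> Zs" "a \<in> Z0" | "b \<notin> Zs" "a \<notin> Z0" by blast
  then have "(\<forall>k\<in>?G. \<forall>k'\<in>?G. k < k' \<longrightarrow> w0 m k' \<le> 4 * (1/2) ^ nat (k' - k))
           \<or> (\<forall>k\<in>?G. \<forall>k'\<in>?G. k < k' \<longrightarrow> w0 m k \<le> 4 * (1/2) ^ nat (k' - k))"
  proof cases
    case 1
    have "w0 m k' \<le> 4 * (1/2) ^ nat (k' - k)" if "k \<in> ?G" "k' \<in> ?G" "k < k'" for k k'
      using class0_short[OF 1, of k a k'] that w0_le_1[of m k'] le_geometric_of_doubling[of "nat (k' - k)" 1 1]
      by auto
    then show ?thesis by blast
  qed (use class0_long[of b] in fastforce)+
  then show ?thesis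
    using zsum_le_8_of_decay[of ?G L U "w0 m"] LU w0_le_1 by simp
qed

lemma class1_sum_le: "zsum (\<lambda>k. if cell1 k = a \<and> cellr k = b \<and> idx k = m then ennreal (w1 m k) else 0) \<le> 8"
proof -
  let ?G = "{k. cell1 k = a \<and> cellr k = b \<and> idx k = m}"
  obtain L U where LU: "\<forall>k. cell1 k = a \<longrightarrow> L \<le> k \<and> k \<le> U" using cell1_bounded by blast
  consider "b \<notin> Zs" | "b \<in> Zs" "a \<in> Z1" | "b \<in> Zs" "a \<notin> Z1" by blast
  then have "(\<forall>k\<in>?G. \<forall>k'\<in>?G. k < k' \<longrightarrow> w1 m k' \<le> 4 * (1/2) ^ nat (k' - k))
           \<or> (\<forall>k\<in>?G. \<forall>k'\<in>?G. k < k' \<longrightarrow> w1 m k \<le> 4 * (1/2) ^ nat (k' - k))"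
  proof cases
    case 1
    have "w1 m k' \<le> 4 * (1/2) ^ nat (k' - k)" if "k \<in> ?G" "k' \<in> ?G" "k < k'" for k k'
      using class1_short[OF 1, of k a k'] that w1_le_1[of m k'] le_geometric_of_doubling[of "nat (k' - k)" 1 1]
      by auto
    then show ?thesis by blast
  qed (use class1_long[of b] in fastforce)+
  then show ?thesis
    using zsum_le_8_of_decay[of ?G L U "w1 m"] LU w1_le_1 by simp
qed

text \<open>Each j is the good index idx0 k (resp. idx1 k) for at most four classes of k with idx k = m.\<close>

lemma idx0_multiplicity_le: "zsum (\<lambda>k. if idx k = m \<and> idx0 k = j then ennreal (w0 m k) else 0) \<le> 32"
proof -
  have "zsum (\<lambda>k. if idx k = m \<and> idx0 k = j then ennreal (w0 m k) else 0)
      \<le> of_nat (card ({j - 1, j} \<times> {m - 1, m})) * 8"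
  proof (rule zsum_le_classes[where c = cell0 and d = cellr])
    fix k assume "idx k = m \<and> idx0 k = j"
    then show "(cell0 k, cellr k) \<in> {j - 1, j} \<times> {m - 1, m}"
      using idx0_eq[of k] idx_eq[of k] by (auto split: if_splits)
  next
    fix a b
    have "zsum (\<lambda>k. if (idx k = m \<and> idx0 k = j) \<and> cell0 k = a \<and> cellr k = b then ennreal (w0 m k) else 0)
        \<le> zsum (\<lambda>k. if cell0 k = a \<and> cellr k = b \<and> idx k = m then ennreal (w0 m k) else 0)"
      by (intro zsum_mono) auto
    then show "zsum (\<lambda>k. if (idx k = m \<and> idx0 k = j) \<and> cell0 k = a \<and> cellr k = b then ennreal (w0 m k) else 0) \<le> 8"
      using class0_sum_le by (rule order_trans)
  qed simp
  then show ?thesis by simp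
qed

lemma idx1_multiplicity_le: "zsum (\<lambda>k. if idx k = m \<and> idx1 k = j then ennreal (w1 m k) else 0) \<le> 32"
proof -
  have "zsum (\<lambda>k. if idx k = m \<and> idx1 k = j then ennreal (w1 m k) else 0)
      \<le> of_nat (card ({j - 1, j} \<times> {m - 1, m})) * 8"
  proof (rule zsum_le_classes[where c = cell1 and d = cellr])
    fix k assume "idx k = m \<and> idx1 k = j"
    then show "(cell1 k, cellr k) \<in> {j - 1, j} \<times> {m - 1, m}"
      using idx1_eq[of k] idx_eq[of k] by (auto split: if_splits)
  next
    fix a b
    have "zsum (\<lambda>k. if (idx k = m \<and> idx1 k = j) \<and> cell1 k = a \<and> cellr k = b then ennreal (w1 m k) else 0)
        \<le> zsum (\<lambda>k. if cell1 k = a \<and> cellr k = b \<and> idx k = m then ennreal (w1 m k) else 0)"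
      by (intro zsum_mono) auto
    then show "zsum (\<lambda>k. if (idx k = m \<and> idx1 k = j) \<and> cell1 k = a \<and> cellr k = b then ennreal (w1 m k) else 0) \<le> 8"
      using class1_sum_le by (rule order_trans)
  qed simp
  then show ?thesis by simp
qed

lemma scaled_pow_le_weighted:
  assumes P: "1 \<le> P" and dec: "\<forall>i. x i = x0 i + x1 i" and m: "idx k = m"
  shows "enn_pow P (ennreal (scaled x k))
    \<le> enn_pow P (ennreal (4 / \<phi> (s m))) * ennreal (2 powr P) *
      (ennreal (w0 m k) * enn_pow P (Kfun Nq0 Nq1 (s0 (idx0 k)) x0 / ennreal (\<phi>0 (s0 (idx0 k))))
       + ennreal (s m powr P) * (ennreal (w1 m k) * enn_pow P (Kfun Nq0 Nq1 (s1 (idx1 k)) x1 / ennreal (\<phi>1 (s1 (idx1 k))))))"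
proof -
  have "enn_pow P (ennreal (scaled x k))
      \<le> enn_pow P (ennreal (4 / \<phi> (s m)) *
          (ennreal (w0 m k) * (Kfun Nq0 Nq1 (s0 (idx0 k)) x0 / ennreal (\<phi>0 (s0 (idx0 k))))
           + ennreal (s m * w1 m k) * (Kfun Nq0 Nq1 (s1 (idx1 k)) x1 / ennreal (\<phi>1 (s1 (idx1 k))))))"
    using scaled_le_Kfun_parts[OF dec, of k] m P by (intro enn_pow_mono) auto
  also have "\<dots> \<le> enn_pow P (ennreal (4 / \<phi> (s m))) * ennreal (2 powr P) *
      (ennreal (w0 m k) * enn_pow P (Kfun Nq0 Nq1 (s0 (idx0 k)) x0 / ennreal (\<phi>0 (s0 (idx0 k))))
       + ennreal (s m powr P) * (ennreal (w1 m k) * enn_pow P (Kfun Nq0 Nq1 (s1 (idx1 k)) x1 / ennreal (\<phi>1 (s1 (idx1 k))))))"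
    by (rule enn_pow_weighted_add_le[OF P w0_nonneg w0_le_1 w1_nonneg w1_le_1 s_pos])
  finally show ?thesis .
qed

lemma class_pow_sum_le_decomposition:
  assumes P: "1 \<le> P" "p = ennreal P" and dec: "\<forall>i. x i = x0 i + x1 i"
  shows "zsum (\<lambda>k. if idx k = m then enn_pow P (ennreal (scaled x k)) else 0)
     \<le> ennreal (64 * 2 powr P) * enn_pow P (ennreal (4 / \<phi> (s m)) * (N0 x0 + ennreal (s m) * N1 x1))"
proof -
  have P0: "0 < P" using P by simp
  define g where "g j = Kfun Nq0 Nq1 (s0 j) x0 / ennreal (\<phi>0 (s0 j))" for j
  define h where "h j = Kfun Nq0 Nq1 (s1 j) x1 / ennreal (\<phi>1 (s1 j))" for j
  let ?c = "ennreal (4 / \<phi> (s m))"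
  let ?Y = "N0 x0 + ennreal (s m) * N1 x1"
  let ?K = "enn_pow P ?c * ennreal (2 powr P)"
  have "zsum (\<lambda>k. if idx k = m then enn_pow P (ennreal (scaled x k)) else 0)
      \<le> zsum (\<lambda>k. ?K * ((if idx k = m then ennreal (w0 m k) * enn_pow P (g (idx0 k)) else 0)
          + ennreal (s m powr P) * (if idx k = m then ennreal (w1 m k) * enn_pow P (h (idx1 k)) else 0)))"
    using scaled_pow_le_weighted[OF P(1) dec, where m = m] unfolding g_def h_def by (intro zsum_mono) auto
  also have "\<dots> = ?K * (zsum (\<lambda>k. if idx k = m then ennreal (w0 m k) * enn_pow P (g (idx0 k)) else 0)
      + ennreal (s m powr P) * zsum (\<lambda>k. if idx k = m then ennreal (w1 m k) * enn_pow P (h (idx1 k)) else 0))"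
    by (simp add: zsum_cmult zsum_add)
  also have "\<dots> \<le> ?K * (ennreal 32 * zsum (\<lambda>j. enn_pow P (g j)) + ennreal (s m powr P) * (ennreal 32 * zsum (\<lambda>j. enn_pow P (h j))))"
    using idx0_multiplicity_le idx1_multiplicity_le
    by (intro mult_left_mono add_mono zsum_regroup_le) auto
  also have "zsum (\<lambda>j. enn_pow P (g j)) = enn_pow P (N0 x0)"
    unfolding g_def P(2) Kspace_def by (rule enn_pow_lp_enn[OF P(1), symmetric])
  also have "zsum (\<lambda>j. enn_pow P (h j)) = enn_pow P (N1 x1)"
    unfolding h_def P(2) Kspace_def by (rule enn_pow_lp_enn[OF P(1), symmetric])
  also have "ennreal (s m powr P) * (ennreal 32 * enn_pow P (N1 x1)) = ennreal 32 * enn_pow P (ennreal (s m) * N1 x1)"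
    using P0 s_pos[of m] by (simp add: enn_pow_mult enn_pow_ennreal mult_ac)
  also have "?K * (ennreal 32 * enn_pow P (N0 x0) + ennreal 32 * enn_pow P (ennreal (s m) * N1 x1))
      \<le> ?K * (ennreal 64 * enn_pow P ?Y)"
  proof (rule mult_left_mono)
    have "enn_pow P (N0 x0) \<le> enn_pow P ?Y" "enn_pow P (ennreal (s m) * N1 x1) \<le> enn_pow P ?Y"
      using P0 by (intro enn_pow_mono; simp)+
    then have "ennreal 32 * enn_pow P (N0 x0) + ennreal 32 * enn_pow P (ennreal (s m) * N1 x1)
        \<le> ennreal 32 * enn_pow P ?Y + ennreal 32 * enn_pow P ?Y"
      by (intro add_mono mult_left_mono) auto
    also have "\<dots> = ennreal 64 * enn_pow P ?Y"
      by (simp add: distrib_right[symmetric])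
    finally show "ennreal 32 * enn_pow P (N0 x0) + ennreal 32 * enn_pow P (ennreal (s m) * N1 x1)
        \<le> ennreal 64 * enn_pow P ?Y" .
  qed simp
  also have "?K * (ennreal 64 * enn_pow P ?Y) = ennreal (64 * 2 powr P) * enn_pow P (?c * ?Y)"
    using P0 by (simp add: enn_pow_mult ennreal_mult mult_ac)
  finally show ?thesis .
qed

lemma class_pow_sum_le:
  assumes P: "1 \<le> P" "p = ennreal P"
  shows "zsum (\<lambda>k. if idx k = m then enn_pow P (ennreal (scaled x k)) else 0)
     \<le> ennreal (64 * 2 powr P * 4 powr P) * enn_pow P (Kfun N0 N1 (s m) x / ennreal (\<phi> (s m)))"
proof -
  have P0: "0 < P" using P by simp
  let ?S = "zsum (\<lambda>k. if idx k = m then enn_pow P (ennreal (scaled x k)) else 0)"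
  define D where "D = 64 * 2 powr P"
  have D: "0 < D" unfolding D_def by simp
  define E where "E = D powr (1/P) * (4 / \<phi> (s m))"
  have E: "0 < E" unfolding E_def using D phi_s_pos[of m] by simp
  have "enn_pow (1/P) ?S \<le> ennreal E * Kfun N0 N1 (s m) x"
  proof (rule Kfun_greatest_scaled[OF E])
    fix x0 x1 assume dec: "\<forall>i. x i = x0 i + x1 i"
    have "enn_pow (1/P) ?S
        \<le> enn_pow (1/P) (ennreal D * enn_pow P (ennreal (4 / \<phi> (s m)) * (N0 x0 + ennreal (s m) * N1 x1)))"
      using P0 class_pow_sum_le_decomposition[OF P dec, of m] unfolding D_def by (intro enn_pow_mono) auto
    also have "\<dots> = enn_pow (1/P) (ennreal D) * (ennreal (4 / \<phi> (s m)) * (N0 x0 + ennreal (s m) * N1 x1))"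
      using P0 by (simp add: enn_pow_mult enn_pow_inverse)
    also have "\<dots> = ennreal E * (N0 x0 + ennreal (s m) * N1 x1)"
    proof -
      have "ennreal E = ennreal (D powr (1/P)) * ennreal (4 / \<phi> (s m))"
        unfolding E_def using D phi_s_pos[of m] by (intro ennreal_mult) auto
      moreover have "enn_pow (1/P) (ennreal D) = ennreal (D powr (1/P))"
        using D by (intro enn_pow_ennreal) simp
      ultimately show ?thesis by (simp only: mult.assoc)
    qed
    finally show "enn_pow (1/P) ?S \<le> ennreal E * (N0 x0 + ennreal (s m) * N1 x1)" .
  qed
  then have "enn_pow P (enn_pow (1/P) ?S) \<le> enn_pow P (ennreal E * Kfun N0 N1 (s m) x)"
    using P0 by (intro enn_pow_mono) auto
  then have "?S \<le> enn_pow P (ennreal E * Kfun N0 N1 (s m) x)"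
    by (simp only: enn_pow_inverse(2)[OF P0])
  also have "\<dots> = ennreal (E powr P) * enn_pow P (Kfun N0 N1 (s m) x)"
    using P0 E by (simp add: enn_pow_mult enn_pow_ennreal)
  also have "E powr P = (64 * 2 powr P * 4 powr P) * (1 / \<phi> (s m)) powr P"
    using D phi_s_pos[of m] P0 powr_mult[of 2 4 P] unfolding E_def D_def
    by (simp add: powr_mult powr_powr powr_divide)
  also have "ennreal ((64 * 2 powr P * 4 powr P) * (1 / \<phi> (s m)) powr P) * enn_pow P (Kfun N0 N1 (s m) x)
      = ennreal (64 * 2 powr P * 4 powr P) * enn_pow P (Kfun N0 N1 (s m) x / ennreal (\<phi> (s m)))"
    using P0 phi_s_pos[of m]
    by (simp add: ennreal_div_eq_mult enn_pow_mult enn_pow_ennreal ennreal_mult mult_ac)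
  finally show ?thesis .
qed

lemma Nrho_le_finite:
  assumes P: "1 \<le> P" "p = ennreal P"
  shows "Nrho x \<le> ennreal ((64 * 2 powr P * 4 powr P) powr (1/P)) * Nouter x"
proof -
  have "zsum (\<lambda>k. enn_pow P (ennreal (scaled x k)))
      = zsum (\<lambda>m. zsum (\<lambda>k. if idx k = m then enn_pow P (ennreal (scaled x k)) else 0))"
    by (rule zsum_partition)
  also have "\<dots> \<le> zsum (\<lambda>m. ennreal (64 * 2 powr P * 4 powr P) * enn_pow P (Kfun N0 N1 (s m) x / ennreal (\<phi> (s m))))"
    by (intro zsum_mono class_pow_sum_le[OF P])
  finally show ?thesis
    unfolding Nrho_eq unfolding Kspace_def P(2) zsum_cmult
    by (intro lp_enn_le_scaled[OF P(1)]) auto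
qed

lemma Nouter_le_Nrho: "\<exists>C>0. \<forall>x. Nouter x \<le> ennreal C * Nrho x"
  using p
proof (cases rule: ennreal_ge_1_cases)
  case 1
  then show ?thesis using Nouter_le_top geo_const_pos by (intro exI[of _ "4 * geo_const"]) auto
next
  case (2 P)
  then show ?thesis using Nouter_le_finite[of P] geo_const_pos
    by (intro exI[of _ "(2 powr P * (2 * geo_const) powr P * (4 * geo_const ^ 2)) powr (1/P)"]) auto
qed

lemma Nrho_le_Nouter: "\<exists>C>0. \<forall>x. Nrho x \<le> ennreal C * Nouter x"
  using p
proof (cases rule: ennreal_ge_1_cases)
  case 1
  then show ?thesis using Nrho_le_top by (intro exI[of _ 4]) auto
next
  case (2 P)
  then show ?thesis using Nrho_le_finite[of P]
    by (intro exI[of _ "(64 * 2 powr P * 4 powr P) powr (1/P)"]) auto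
qed

end

theorem lemma3p10:
  fixes p q :: ennreal and \<phi>0 \<phi>1 \<phi> :: "real \<Rightarrow> real"
    and tt s0 s1 s :: "int \<Rightarrow> real"
  assumes "1 \<le> p" and "1 \<le> q"
    and "qconcave \<phi>0" and "qconcave \<phi>1" and "qconcave \<phi>"
    and "discretizing tt (fcomp \<phi> \<phi>0 \<phi>1)"
    and "discretizing s0 \<phi>0" and "discretizing s1 \<phi>1" and "discretizing s \<phi>"
  shows "equiv_norms
     (Kspace (Kspace (lqw q (\<lambda>_. 1)) (lqw q (\<lambda>k. 1 / tt k)) s0 \<phi>0 p)
             (Kspace (lqw q (\<lambda>_. 1)) (lqw q (\<lambda>k. 1 / tt k)) s1 \<phi>1 p) s \<phi> p)
     (lqw p (\<lambda>i. 1 / fcomp \<phi> \<phi>0 \<phi>1 (tt i)))"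
proof -
  interpret reiteration p q \<phi>0 \<phi>1 \<phi> tt s0 s1 s
    using assms by unfold_locales
  show ?thesis
    using Nouter_le_Nrho Nrho_le_Nouter by (rule equiv_normsI)
qed

end
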